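(* Let $0<q<p\le1$, $n\in\mathbb{N}$, and for $x\in[0,1]$ let $\psi_i(t)=(t-x)^i$, $i=1,2$. Then for all $x\in[0,1]$, $$\widetilde{M}_{n,k}^{(p,q)}(\psi_1;x)\le \frac{p^n-q^nx}{q^2[n]_{p,q}}+\left(\frac1q-1\right)x,$$ $$\widetilde{M}_{n,k}^{(p,q)}(\psi_2;x)\le x^2\left(1-\frac{1}{q^2}+\frac{2(q+1)}{q^2[n]_{p,q}}\right)+\frac{(p+q)^2}{q^5}\frac{(p^n-q^nx)}{[n]_{p,q}}x+\frac{p(p+q)}{q^6}\frac{(p^n-q^nx)(p^{n-1}-q^{n-1}x)}{[n]_{p,q}[n-1]_{p,q}}.$$
   Context: For $0<q<p\le1$: $[n]_{p,q}=\frac{p^n-q^n}{p-q}$; $[n]_{p,q}!=[1]_{p,q}\cdots[n]_{p,q}$, $[0]_{p,q}!=1$; $\begin{bmatrix}n\\k\end{bmatrix}_{p,q}=\frac{[n]_{p,q}!}{[k]_{p,q}![n-k]_{p,q}!}$; $(x+y)_{p,q}^n=\prod_{j=0}^{n-1}(p^jx+q^jy)$. The $(p,q)$-integral is $\int_0^a f(t)\,d_{p,q}t=(p-q)a\sum_{j=0}^\infty \frac{q^j}{p^{j+1}}f\!\left(\frac{q^j}{p^{j+1}}a\right)$. Define $m_{n,k}^{(p,q)}(x)=\frac{1}{p^{kn+n(n+1)/2}}\begin{bmatrix}n+k\\k\end{bmatrix}_{p,q}x^k(1-x)^{n+1}_{p,q}$ and $b_{n,k}^{(p,q)}(qt)=\frac{1}{p^{k(n-1)+n(n-1)/2}}\begin{bmatrix}n+k+1\\k\end{bmatrix}_{p,q}(qt)^k(1-qt)^n_{p,q}$.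 The operator is $$\widetilde{M}_{n,k}^{(p,q)}(f;x)=\frac{[n+1]_{p,q}}{p^n}\sum_{k=0}^\infty m_{n,k}^{(p,q)}(x)\,(pq)^{-k}\int_0^1 b_{n,k}^{(p,q)}(qt)f(t)\,d_{p,q}t,\quad 0\le x<1,$$ and $\widetilde{M}_{n,k}^{(p,q)}(f;1)=f(1)$; here $\psi_i$ is applied as a function of $t$ with $x$ fixed. *)

theory Defs
  imports Complex_Main
begin

definition pq_int :: "real \<Rightarrow> real \<Rightarrow> nat \<Rightarrow> real" where
  "pq_int p q n = (p ^ n - q ^ n) / (p - q)"

definition pq_fact :: "real \<Rightarrow> real \<Rightarrow> nat \<Rightarrow> real" where
  "pq_fact p q n = (\<Prod>i\<in>{1..n}. pq_int p q i)"

definition pq_binom :: "real \<Rightarrow> real \<Rightarrow> nat \<Rightarrow> nat \<Rightarrow> real" where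
  "pq_binom p q n k = pq_fact p q n / (pq_fact p q k * pq_fact p q (n - k))"

definition pq_pow :: "real \<Rightarrow> real \<Rightarrow> real \<Rightarrow> real \<Rightarrow> nat \<Rightarrow> real" where
  "pq_pow p q x y n = (\<Prod>j<n. p ^ j * x + q ^ j * y)"

definition pq_integral :: "real \<Rightarrow> real \<Rightarrow> real \<Rightarrow> (real \<Rightarrow> real) \<Rightarrow> real" where
  "pq_integral p q a f =
     (p - q) * a * (\<Sum>j. q ^ j / p ^ (j + 1) * f (q ^ j / p ^ (j + 1) * a))"

definition m_basis :: "real \<Rightarrow> real \<Rightarrow> nat \<Rightarrow> nat \<Rightarrow> real \<Rightarrow> real" where
  "m_basis p q n k x =
     1 / p ^ (k * n + n * (n + 1) div 2) * pq_binom p q (n + k) k * x ^ k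
       * pq_pow p q 1 (- x) (n + 1)"

text \<open>b_{n,k}^{(p,q)}(qt)\<close>
definition b_basis :: "real \<Rightarrow> real \<Rightarrow> nat \<Rightarrow> nat \<Rightarrow> real \<Rightarrow> real" where
  "b_basis p q n k t =
     1 / p ^ (k * (n - 1) + n * (n - 1) div 2) * pq_binom p q (n + k + 1) k * (q * t) ^ k
       * pq_pow p q 1 (- (q * t)) n"

definition M_op :: "real \<Rightarrow> real \<Rightarrow> nat \<Rightarrow> (real \<Rightarrow> real) \<Rightarrow> real \<Rightarrow> real" where
  "M_op p q n f x =
     (if x = 1 then f 1
      else pq_int p q (n + 1) / p ^ n *
        (\<Sum>k. m_basis p q n k x * (1 / (p * q) ^ k)
               * pq_integral p q 1 (\<lambda>t. b_basis p q n k t * f t)))"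

end

theory Submission
  imports Defs
begin

text \<open>Put $r = q/p$. Every $(p,q)$-quantity in the operator is a power of $p$ times its ordinary
  $r$-analogue, and on a quadratic $\alpha + \beta t + \gamma t^2$ the operator becomes the series
  $\sum_k w_k(x)\,(\alpha + \beta G(y_k)/p + \gamma H(y_k)/p^2)$ over the negative $r$-binomial
  distribution $w_k(x)$ at the nodes $y_k = r^{k+1}$, where $G(y) = (1-y)/(1-r^{n+1}y)$ and
  $H(y) = G(y)\,G(ry)$ are the first two moments of the $k$-th kernel. Since $G$ and $yG(y)$ are concave
  and $H - G^2$ is at most a multiple of $yG(y)$, each term is dominated by a quadratic polynomial in
  $y_k - m$, where $m$ is the mean node, and the weighted sum of that polynomial only involves the first
  two moments of $w$, which the negative $r$-binomial theorem gives in closed form. The resulting bounds,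
  written through $r$-integers, are then compared with the stated ones coefficient by coefficient.\<close>

section \<open>Ordinary $q$-analogues\<close>

definition qint :: "real \<Rightarrow> nat \<Rightarrow> real" where
  "qint r m = (1 - r^m) / (1 - r)"

definition qfact :: "real \<Rightarrow> nat \<Rightarrow> real" where
  "qfact r m = (\<Prod>i\<in>{1..m}. qint r i)"

definition qbinom :: "real \<Rightarrow> nat \<Rightarrow> nat \<Rightarrow> real" where
  "qbinom r m k = qfact r m / (qfact r k * qfact r (m - k))"

definition qpoch :: "real \<Rightarrow> real \<Rightarrow> nat \<Rightarrow> real" where
  "qpoch r z n = (\<Prod>j<n. 1 - r^j * z)"

definition qbeta :: "real \<Rightarrow> nat \<Rightarrow> nat \<Rightarrow> real" where
  "qbeta r m n = qfact r m * qfact r n / (qfact r (m + n + 1) * (1 - r))"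

lemma qint_add: "r \<noteq> 1 \<Longrightarrow> qint r (m + l) = qint r m + r^m * qint r l"
  by (simp add: qint_def power_add field_simps)

lemma one_minus_power_eq: "r \<noteq> 1 \<Longrightarrow> 1 - r^m = (1 - r) * qint r m"
  by (simp add: qint_def)

lemma qpoch_Suc: "qpoch r z (Suc n) = qpoch r z n * (1 - r^n * z)"
  unfolding qpoch_def by simp

lemma qpoch_Suc_shift: "qpoch r z (Suc n) = (1 - z) * qpoch r (r * z) n"
  unfolding qpoch_def by (subst prod.lessThan_Suc_shift) (simp add: ac_simps)

lemma qpoch_pos:
  assumes "0 < r" "r \<le> 1" "0 \<le> z" "z < 1"
  shows "qpoch r z n > 0"
  unfolding qpoch_def
proof (intro prod_pos ballI)
  fix j
  have "r^j * z \<le> z" using assms by (simp add: power_le_one mult_left_le_one_le)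
  then show "0 < 1 - r^j * z" using assms by simp
qed

lemma qfact_0 [simp]: "qfact r 0 = 1"
  by (simp add: qfact_def)

lemma qfact_Suc: "qfact r (Suc m) = qfact r m * qint r (Suc m)"
  by (simp add: qfact_def prod.nat_ivl_Suc')

context
  fixes r :: real
  assumes r: "0 < r" "r < 1"
begin

lemma qint_Suc: "qint r (Suc m) = 1 + r * qint r m"
  using qint_add[of r 1 m] r by (simp add: qint_def)

lemma qint_ge_1: "m \<ge> 1 \<Longrightarrow> qint r m \<ge> 1"
proof (induction m)
  case (Suc m)
  then show ?case
    using r by (cases "m = 0") (simp_all add: qint_Suc qint_def)
qed simp

lemma qint_pos: "m \<ge> 1 \<Longrightarrow> qint r m > 0"
  using qint_ge_1 by fastforce

lemma qint_nonneg: "qint r m \<ge> 0"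
  using qint_ge_1[of m] by (cases m) (auto simp: qint_def)

lemma qint_mono: "m \<le> l \<Longrightarrow> qint r m \<le> qint r l"
  using qint_add[of r m "l - m"] r qint_nonneg[of "l - m"] by simp

lemma qint_le_of_nat: "qint r m \<le> real m"
proof (induction m)
  case (Suc m)
  have "r * qint r m \<le> qint r m" using qint_nonneg[of m] r by (intro mult_left_le_one_le) auto
  then show ?case unfolding qint_Suc using Suc by simp
qed (simp add: qint_def)

lemma qint_ratio: "qint r m / qint r l = (1 - r^m) / (1 - r^l)"
  using r by (simp add: qint_def)

lemma qfact_pos: "qfact r m > 0"
  unfolding qfact_def using qint_pos by (intro prod_pos) auto

lemma qbinom_nonneg: "qbinom r m k \<ge> 0"
  using qfact_pos[of m] qfact_pos[of k] qfact_pos[of "m - k"] by (simp add: qbinom_def)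

lemma qbinom_self: "qbinom r k k = 1"
  using qfact_pos[of k] by (simp add: qbinom_def)

lemma qbinom_0: "qbinom r m 0 = 1"
  using qfact_pos[of m] by (simp add: qbinom_def)

lemma qbinom_pascal:
  "qbinom r (Suc n + Suc k) (Suc k) = qbinom r (Suc n + k) k + r^(Suc k) * qbinom r (n + Suc k) (Suc k)"
proof -
  have A: "qbinom r (Suc n + Suc k) (Suc k)
      = qfact r (Suc (n+k)) * qint r (Suc (Suc (n+k)))
        / (qfact r k * qint r (Suc k) * (qfact r n * qint r (Suc n)))"
    unfolding qbinom_def by (simp add: qfact_Suc)
  have B: "qbinom r (Suc n + k) k = qfact r (Suc (n+k)) / (qfact r k * (qfact r n * qint r (Suc n)))"
    unfolding qbinom_def by (simp add: qfact_Suc)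
  have C: "qbinom r (n + Suc k) (Suc k) = qfact r (Suc (n+k)) / (qfact r k * qint r (Suc k) * qfact r n)"
    unfolding qbinom_def by (simp add: qfact_Suc)
  have split: "qint r (Suc (Suc (n+k))) = qint r (Suc k) + r^(Suc k) * qint r (Suc n)"
    using qint_add[of r "Suc k" "Suc n"] r by (simp add: add.commute)
  have "qfact r k > 0" "qfact r n > 0" "qfact r (Suc (n+k)) > 0" "qint r (Suc k) > 0" "qint r (Suc n) > 0"
    using qfact_pos qint_pos by auto
  then show ?thesis unfolding A B C split by (simp add: field_simps)
qed

lemma qbinom_Suc_series_step:
  "qbinom r (Suc n + Suc k) (Suc k) * z^(Suc k)
    = z * (qbinom r (Suc n + k) k * z^k) + qbinom r (n + Suc k) (Suc k) * (r*z)^(Suc k)"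
  using qbinom_pascal[of n k] by (simp add: algebra_simps)

lemma qbinom_Suc_partial_sum:
  "(1 - z) * (\<Sum>k<Suc K. qbinom r (Suc n + k) k * z^k)
    = (\<Sum>k<Suc K. qbinom r (n + k) k * (r*z)^k) - z * (qbinom r (Suc n + K) K * z^K)"
proof -
  define a g where "a k = qbinom r (Suc n + k) k * z^k" and "g k = qbinom r (n + k) k * (r*z)^k" for k
  have step: "a (Suc k) = z * a k + g (Suc k)" for k
    unfolding a_def g_def by (rule qbinom_Suc_series_step)
  have "(1 - z) * (\<Sum>k<Suc K. a k) = (\<Sum>k<Suc K. g k) - z * a K"
  proof (induction K)
    case (Suc K)
    have "(1 - z) * (\<Sum>k<Suc (Suc K). a k) = (1 - z) * (\<Sum>k<Suc K. a k) + (1 - z) * a (Suc K)"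
      by (simp add: algebra_simps)
    also have "\<dots> = ((\<Sum>k<Suc K. g k) - z * a K) + (1 - z) * (z * a K + g (Suc K))"
      using Suc.IH step[of K] by simp
    also have "\<dots> = (\<Sum>k<Suc (Suc K). g k) - z * (z * a K + g (Suc K))"
      by (simp add: algebra_simps)
    finally show ?case using step[of K] by simp
  qed (simp add: a_def g_def qbinom_0)
  then show ?thesis unfolding a_def g_def .
qed

text \<open>Induction on $n$: the partial sums for $n+1$ at $z$ are controlled by those for $n$ at $rz$.\<close>

lemma qbinom_negative_sums:
  "0 \<le> z \<Longrightarrow> z < 1 \<Longrightarrow> (\<lambda>k. qbinom r (n + k) k * z^k)
      sums (1 / qpoch r z (Suc n))"
proof (induction n arbitrary: z)
  case 0
  have "(\<lambda>k. z^k) sums (1 / (1 - z))" using 0 by (intro geometric_sums) simp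
  then show ?case using qbinom_self by (simp add: qpoch_def)
next
  case (Suc n)
  define a where "a k = qbinom r (Suc n + k) k * z^k" for k
  define g where "g k = qbinom r (n + k) k * (r * z)^k" for k
  define S' where "S' = 1 / qpoch r (r * z) (Suc n)"
  have "r * z \<le> z" using Suc.prems r by (simp add: mult_left_le_one_le)
  then have rz: "0 \<le> r * z" "r * z < 1" using Suc.prems r by auto
  have g_sums: "g sums S'" unfolding g_def S'_def using Suc.IH[OF rz] .
  have a_nonneg: "a k \<ge> 0" for k unfolding a_def using qbinom_nonneg Suc.prems by simp
  have g_nonneg: "g k \<ge> 0" for k unfolding g_def using qbinom_nonneg rz by simp
  have partial: "(1 - z) * (\<Sum>k<Suc K. a k) = (\<Sum>k<Suc K. g k) - z * a K" for K
    using qbinom_Suc_partial_sum[of z n K] unfolding a_def g_def .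
  have g_partial_le: "(\<Sum>k<K. g k) \<le> S'" for K
    using g_sums g_nonneg by (auto simp: sums_iff intro: sum_le_suminf)
  have "(1 - z) * (\<Sum>k<K. a k) \<le> S'" for K
  proof (cases K)
    case (Suc K')
    then show ?thesis
      using partial[of K'] g_partial_le[of K] a_nonneg[of K'] Suc.prems by (smt (verit) mult_nonneg_nonneg)
  qed (use g_partial_le[of 0] in simp)
  then have "(\<Sum>k<K. a k) \<le> S' / (1 - z)" for K
    using Suc.prems by (simp add: field_simps mult.commute)
  then have "summable a" by (rule summableI_nonneg_bounded[OF a_nonneg])
  then obtain S where a_sums: "a sums S" by (auto simp: summable_def)
  have "(\<lambda>k. a (Suc k)) sums (S - 1)"
    using a_sums sums_iff_shift[of a 1 "S - 1"] qbinom_0 by (simp add: a_def)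
  moreover have "(\<lambda>k. a (Suc k)) sums (z * S + (S' - 1))"
  proof -
    have "(\<lambda>k. g (Suc k)) sums (S' - 1)"
      using g_sums sums_iff_shift[of g 1 "S' - 1"] qbinom_0 by (simp add: g_def)
    then have "(\<lambda>k. z * a k + g (Suc k)) sums (z * S + (S' - 1))"
      by (intro sums_add sums_mult a_sums)
    then show ?thesis using qbinom_Suc_series_step by (simp add: a_def g_def)
  qed
  ultimately have "S - 1 = z * S + (S' - 1)" by (rule sums_unique2)
  then have "S = S' / (1 - z)" using Suc.prems by (simp add: field_simps)
  also have "\<dots> = 1 / qpoch r z (Suc (Suc n))"
    unfolding S'_def using qpoch_Suc_shift[of r z "Suc n"] by simp
  finally show ?case using a_sums unfolding a_def by simp
qed

lemma qbeta_commute: "qbeta r m n = qbeta r n m"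
  by (simp add: qbeta_def add.commute mult.commute)

lemma qbeta_Suc_left: "qbeta r (m+1) n = qbeta r m n * (qint r (m+1) / qint r (n+m+2))"
proof -
  have "qfact r (m + 1 + n + 1) = qfact r (m + n + 1) * qint r (n + m + 2)"
    by (simp add: qfact_Suc add.commute)
  then show ?thesis
    using qfact_pos[of m] qfact_pos[of n] qfact_pos[of "m+n+1"] qint_pos[of "m+1"] qint_pos[of "n+m+2"] r
    by (simp add: qbeta_def qfact_Suc field_simps)
qed

lemma qbeta_Suc_right: "qbeta r m (n+1) = qbeta r m n * (qint r (n+1) / qint r (n+m+2))"
  using qbeta_Suc_left[of n m] by (simp add: qbeta_commute add.commute)

text \<open>The Jackson integral $\int_0^1 t^m (rt;r)_n\,d_rt$, which is $(1-r)$ times this series,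
  is the $q$-beta value $[m]_r!\,[n]_r!/[m+n+1]_r!$.\<close>

lemma qbeta_sums: "(\<lambda>j. r^(j*(m+1)) * qpoch r (r^(j+1)) n) sums qbeta r m n"
proof (induction n arbitrary: m)
  case 0
  have lt: "r^(m+1) < 1" using r power_less_one_iff[of r "m+1"] by linarith
  have "(\<lambda>j. (r^(m+1))^j) sums (1 / (1 - r^(m+1)))"
    using lt r by (intro geometric_sums) simp
  moreover have "1 / (1 - r^(m+1)) = qbeta r m 0"
    using qfact_pos[of m] r by (simp add: qbeta_def qfact_Suc qint_def)
  moreover have "r^(j*(m+1)) * qpoch r (r^(j+1)) 0 = (r^(m+1))^j" for j
    unfolding qpoch_def mult.commute[of j] power_mult by simp
  ultimately show ?case by simp
next
  case (Suc n)
  have step: "r^(j*(m+1)) * qpoch r (r^(j+1)) (Suc n) =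
      r^(j*(m+1)) * qpoch r (r^(j+1)) n - r^(n+1) * (r^(j*(m+1+1)) * qpoch r (r^(j+1)) n)" for j
  proof -
    have exps: "r^(j*(m+1)) * (r^n * r^(j+1)) = r^(n+1) * r^(j*(m+1+1))"
      by (simp flip: power_add add: algebra_simps)
    have "r^(j*(m+1)) * qpoch r (r^(j+1)) (Suc n)
        = r^(j*(m+1)) * qpoch r (r^(j+1)) n - (r^(j*(m+1)) * (r^n * r^(j+1))) * qpoch r (r^(j+1)) n"
      unfolding qpoch_Suc by (simp add: algebra_simps)
    then show ?thesis unfolding exps by (simp add: mult_ac)
  qed
  have "(\<lambda>j. r^(j*(m+1)) * qpoch r (r^(j+1)) n - r^(n+1) * (r^(j*(m+1+1)) * qpoch r (r^(j+1)) n))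
      sums (qbeta r m n - r^(n+1) * qbeta r (m+1) n)"
    by (intro sums_diff sums_mult Suc.IH)
  moreover have "qbeta r m n - r^(n+1) * qbeta r (m+1) n = qbeta r m (Suc n)"
  proof -
    have "qint r (n+m+2) = qint r (n+1) + r^(n+1) * qint r (m+1)"
      using qint_add[of r "n+1" "m+1"] r by (simp add: add.commute add.left_commute)
    then have ratio: "1 - r^(n+1) * (qint r (m+1) / qint r (n+m+2)) = qint r (n+1) / qint r (n+m+2)"
      using qint_pos[of "n+m+2"] by (simp add: field_simps)
    have "qbeta r m n - r^(n+1) * qbeta r (m+1) n
        = qbeta r m n * (1 - r^(n+1) * (qint r (m+1) / qint r (n+m+2)))"
      unfolding qbeta_Suc_left by (simp add: algebra_simps)
    also have "\<dots> = qbeta r m (n+1)"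
      unfolding ratio qbeta_Suc_right ..
    finally show ?thesis by simp
  qed
  ultimately show ?case unfolding step by (simp only:)
qed

end

section \<open>Moments of the negative $q$-binomial weights\<close>

definition qnb_weight :: "real \<Rightarrow> nat \<Rightarrow> real \<Rightarrow> nat \<Rightarrow> real" where
  "qnb_weight r n x k = qbinom r (n + k) k * x^k * qpoch r x (Suc n)"

definition nb_mean :: "real \<Rightarrow> nat \<Rightarrow> real \<Rightarrow> real" where
  "nb_mean r n x = r * (1 - x) / (1 - r^(n+1) * x)"

lemma power_Suc_bounds:
  fixes r :: real
  assumes "0 < r" "r < 1"
  shows "0 < r^(n+1)" "r^(n+1) < 1" "r^(n+1) \<le> r"
proof -
  show "0 < r^(n+1)" "r^(n+1) < 1"
    using assms power_less_one_iff[of r "n+1"] by auto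
  have "r^(n+1) \<le> r^1" using assms by (intro power_decreasing) auto
  then show "r^(n+1) \<le> r" by simp
qed

context
  fixes r :: real and n :: nat and x :: real
  assumes r: "0 < r" "r < 1" and x: "0 \<le> x" "x < 1"
begin

lemma qnb_weight_nonneg: "qnb_weight r n x k \<ge> 0"
  unfolding qnb_weight_def using qbinom_nonneg[OF r] qpoch_pos[of r x] r x
  by (intro mult_nonneg_nonneg) (auto intro: less_imp_le)

lemma power_mult_x_bounds: "0 \<le> r^m * x" "r^m * x \<le> x" "r^m * x < 1"
proof -
  show "r^m * x \<le> x" using x r by (intro mult_left_le_one_le) (auto simp: power_le_one)
  then show "0 \<le> r^m * x" "r^m * x < 1" using r x by auto
qed

lemma one_minus_power_Suc_x_pos: "1 - r^(n+1) * x > 0" "1 - r^(n+1) * r * x > 0"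
  using power_mult_x_bounds(3)[of "n+1"] power_mult_x_bounds(3)[of "n+2"] by (auto simp: mult_ac)

lemma qnb_weight_moment_power: "(\<lambda>k. qnb_weight r n x k * (r^m)^k)
    sums (qpoch r x (Suc n) / qpoch r (r^m * x) (Suc n))"
proof -
  have "(\<lambda>k. qbinom r (n+k) k * (r^m * x)^k) sums (1 / qpoch r (r^m * x) (Suc n))"
    using qbinom_negative_sums[OF r power_mult_x_bounds(1,3)] .
  then have "(\<lambda>k. qpoch r x (Suc n) * (qbinom r (n+k) k * (r^m * x)^k))
      sums (qpoch r x (Suc n) * (1 / qpoch r (r^m * x) (Suc n)))"
    by (rule sums_mult)
  then show ?thesis unfolding qnb_weight_def by (simp add: power_mult_distrib mult_ac)
qed

lemma qnb_weight_sums_1: "qnb_weight r n x sums 1"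
proof -
  have "qpoch r x (Suc n) > 0" using qpoch_pos[of r x] r x by simp
  then show ?thesis using qnb_weight_moment_power[of 0] by simp
qed

lemma qnb_weight_moment_1: "(\<lambda>k. qnb_weight r n x k * r^(k+1)) sums nb_mean r n x"
proof -
  have "qpoch r x (Suc n) = (1-x) * qpoch r (r*x) n" by (rule qpoch_Suc_shift)
  moreover have "qpoch r (r*x) (Suc n) = qpoch r (r*x) n * (1 - r^(n+1)*x)"
    unfolding qpoch_Suc by (simp add: mult_ac)
  moreover have "qpoch r (r*x) n > 0" using qpoch_pos[of r "r*x"] r power_mult_x_bounds(1,3)[of 1] by simp
  ultimately have "qpoch r x (Suc n) / qpoch r (r*x) (Suc n) = (1-x)/(1 - r^(n+1)*x)" by simp
  then have "(\<lambda>k. r * (qnb_weight r n x k * r^k)) sums (r * ((1-x)/(1 - r^(n+1)*x)))"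
    using sums_mult[OF qnb_weight_moment_power[of 1], of r] by simp
  then show ?thesis by (simp add: nb_mean_def mult_ac)
qed

lemma qnb_weight_moment_2:
  assumes "n \<ge> 1"
  shows "(\<lambda>k. qnb_weight r n x k * (r^(k+1))^2)
    sums (r^2 * (1-x) * (1 - r*x) / ((1 - r^(n+1)*x) * (1 - r^(n+1)*r*x)))"
proof -
  obtain n' where n': "n = Suc n'" using assms by (cases n) auto
  have "qpoch r x (Suc n) = (1-x) * ((1-r*x) * qpoch r (r^2*x) n')"
    unfolding n' qpoch_Suc_shift by (simp add: power2_eq_square mult_ac)
  moreover have "qpoch r (r^2*x) (Suc n) = qpoch r (r^2*x) n' * (1 - r^(n+1)*x) * (1 - r^(n+1)*r*x)"
    unfolding n' qpoch_Suc by (simp add: power2_eq_square mult_ac)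
  moreover have "qpoch r (r^2*x) n' > 0" using qpoch_pos[of r "r^2*x"] r power_mult_x_bounds(1,3)[of 2] by simp
  ultimately have "qpoch r x (Suc n) / qpoch r (r^2*x) (Suc n)
      = (1-x)*(1-r*x)/((1 - r^(n+1)*x) * (1 - r^(n+1)*r*x))" by simp
  then have "(\<lambda>k. r^2 * (qnb_weight r n x k * (r^2)^k))
      sums (r^2 * ((1-x)*(1-r*x)/((1 - r^(n+1)*x) * (1 - r^(n+1)*r*x))))"
    using sums_mult[OF qnb_weight_moment_power[of 2], of "r^2"] by simp
  moreover have "(\<lambda>k. r^2 * (qnb_weight r n x k * (r^2)^k))
      = (\<lambda>k. qnb_weight r n x k * (r^(k+1))^2)"
    by (rule ext) (simp add: power_mult_distrib power_add mult_ac flip: power_mult)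
  ultimately show ?thesis by (simp add: mult_ac)
qed

lemma nb_mean_bounds: "0 \<le> nb_mean r n x" "nb_mean r n x \<le> r"
proof -
  show "0 \<le> nb_mean r n x"
    unfolding nb_mean_def using one_minus_power_Suc_x_pos r x by simp
  have "1 - x \<le> 1 - r^(n+1) * x"
    using power_mult_x_bounds(2)[of "n+1"] by simp
  then have "(1-x) / (1 - r^(n+1) * x) \<le> 1" using one_minus_power_Suc_x_pos by simp
  then have "r * ((1-x) / (1 - r^(n+1) * x)) \<le> r * 1" using r by (intro mult_left_mono) auto
  then show "nb_mean r n x \<le> r" unfolding nb_mean_def by simp
qed

end

lemma sums_quadratic_centered:
  fixes P Y :: "nat \<Rightarrow> real"
  assumes "P sums 1" "(\<lambda>k. P k * Y k) sums m" "(\<lambda>k. P k * (Y k)^2) sums E2"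
  shows "(\<lambda>k. P k * (c0 + c1*(Y k - m) + c2*(Y k - m)^2)) sums (c0 + c2*(E2 - m^2))"
proof -
  have "(\<lambda>k. (c0 - c1*m + c2*m^2) * P k + (c1 - 2*c2*m) * (P k * Y k) + c2 * (P k * (Y k)^2))
      sums ((c0 - c1*m + c2*m^2) * 1 + (c1 - 2*c2*m) * m + c2 * E2)"
    by (intro sums_add sums_mult assms)
  moreover have "(\<lambda>k. (c0 - c1*m + c2*m^2) * P k + (c1 - 2*c2*m) * (P k * Y k) + c2 * (P k * (Y k)^2))
      = (\<lambda>k. P k * (c0 + c1*(Y k - m) + c2*(Y k - m)^2))"
    by (rule ext) (simp add: algebra_simps power2_eq_square)
  moreover have "(c0 - c1*m + c2*m^2) * 1 + (c1 - 2*c2*m) * m + c2 * E2 = c0 + c2*(E2 - m^2)"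
    by (simp add: algebra_simps power2_eq_square)
  ultimately show ?thesis by metis
qed

section \<open>Reduction to the base $r = q/p$\<close>

text \<open>For $q = rp$ every $(p,q)$-object is a power of $p$ times its $r$-analogue; the exponents are
  triangular numbers.\<close>

definition tri_num :: "nat \<Rightarrow> nat" where
  "tri_num m = (\<Sum>i<m. i)"

lemma tri_num_Suc: "tri_num (Suc m) = tri_num m + m"
  by (simp add: tri_num_def)

lemma tri_num_add: "tri_num (k + l) = tri_num k + tri_num l + k * l"
  by (induction l) (simp_all add: tri_num_def algebra_simps)

lemma tri_num_eq: "tri_num m = m * (m - 1) div 2"
proof -
  have "2 * tri_num m = m * (m - 1)"
  proof (induction m)
    case (Suc m)
    then show ?case by (cases m) (simp_all add: tri_num_Suc algebra_simps)
  qed (simp add: tri_num_def)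
  then show ?thesis by simp
qed

context
  fixes p r :: real
  assumes p: "0 < p" and r: "0 < r" "r < 1"
begin

lemma pq_int_eq_qint: "pq_int p (r*p) m = p^(m-1) * qint r m"
proof (cases m)
  case (Suc m')
  have "p - r*p = p * (1 - r)" by (simp add: algebra_simps)
  then show ?thesis using p r Suc by (simp add: pq_int_def qint_def power_mult_distrib field_simps)
qed (simp add: pq_int_def qint_def)

lemma pq_fact_eq_qfact: "pq_fact p (r*p) m = p^(tri_num m) * qfact r m"
proof (induction m)
  case (Suc m)
  have "pq_fact p (r*p) (Suc m) = pq_fact p (r*p) m * pq_int p (r*p) (Suc m)"
    by (simp add: pq_fact_def prod.nat_ivl_Suc')
  then show ?case
    using Suc by (simp add: pq_int_eq_qint qfact_Suc tri_num_Suc power_add)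
qed (simp add: pq_fact_def tri_num_def)

lemma pq_binom_eq_qbinom: "pq_binom p (r*p) (k+l) k = p^(k*l) * qbinom r (k+l) k"
proof -
  have "pq_binom p (r*p) (k+l) k
      = p^(tri_num k + tri_num l + k*l) * qfact r (k+l)
        / (p^(tri_num k) * qfact r k * (p^(tri_num l) * qfact r l))"
    by (simp add: pq_binom_def pq_fact_eq_qfact tri_num_add)
  then show ?thesis
    using p qfact_pos[OF r] by (simp add: qbinom_def power_add)
qed

lemma pq_pow_eq_qpoch: "pq_pow p (r*p) 1 (-z) m = p^(tri_num m) * qpoch r z m"
proof -
  have "pq_pow p (r*p) 1 (-z) m = (\<Prod>j<m. p^j * (1 - r^j * z))"
    unfolding pq_pow_def by (intro prod.cong) (auto simp: power_mult_distrib algebra_simps)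
  also have "\<dots> = (\<Prod>j<m. p^j) * qpoch r z m"
    by (simp add: qpoch_def prod.distrib)
  also have "(\<Prod>j<m. p^j) = p^(tri_num m)"
    by (simp add: tri_num_def power_sum)
  finally show ?thesis .
qed

lemma m_basis_eq_qnb_weight: "m_basis p (r*p) n k x = qnb_weight r n x k"
proof -
  have "n * (n+1) div 2 = tri_num (Suc n)" by (simp add: tri_num_eq)
  then have "m_basis p (r*p) n k x
      = 1 / p^(k*n + tri_num (Suc n)) * (p^(k*n) * qbinom r (k+n) k) * x^k
        * (p^(tri_num (Suc n)) * qpoch r x (Suc n))"
    unfolding m_basis_def using pq_binom_eq_qbinom[of k n] pq_pow_eq_qpoch[of x "Suc n"]
    by (simp add: add.commute)
  then show ?thesis
    using p by (simp add: qnb_weight_def power_add add.commute)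
qed

text \<open>The $(p,q)$-integral over $[0,1]$ samples its integrand at the nodes $r^j/p$.\<close>

lemma b_basis_at_node:
  assumes "n \<ge> 1"
  shows "b_basis p (r*p) n k (r^j/p) = p^(2*k) * qbinom r (n+k+1) k * r^(k*(j+1)) * qpoch r (r^(j+1)) n"
proof -
  have tri: "n * (n-1) div 2 = tri_num n" by (simp add: tri_num_eq)
  have exp: "k*(n+1) = k*(n-1) + 2*k" using assms by (cases n) auto
  have node: "r*p*(r^j/p) = r^(j+1)" using p by simp
  have "b_basis p (r*p) n k (r^j/p)
      = 1 / p^(k*(n-1) + tri_num n) * (p^(k*(n+1)) * qbinom r (k+(n+1)) k) * (r^(j+1))^k
        * (p^(tri_num n) * qpoch r (r^(j+1)) n)"
    unfolding b_basis_def tri node using pq_binom_eq_qbinom[of k "n+1"] pq_pow_eq_qpoch[of "r^(j+1)" n]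
    by (simp add: add.commute add.left_commute)
  then show ?thesis
    unfolding exp using p
    by (simp add: power_add power_mult power_mult_distrib mult.commute add.commute add.left_commute)
qed

lemma pq_integral_eq_sums:
  assumes "(\<lambda>j. r^j * g (r^j/p)) sums S"
  shows "pq_integral p (r*p) 1 g = (1-r) * S"
proof -
  have "(\<lambda>j. (r*p)^j / p^(j+1) * g ((r*p)^j / p^(j+1) * 1)) = (\<lambda>j. (1/p) * (r^j * g (r^j/p)))"
    using p by (auto simp: power_mult_distrib)
  then have "(\<lambda>j. (r*p)^j / p^(j+1) * g ((r*p)^j / p^(j+1) * 1)) sums (S/p)"
    using sums_mult[OF assms, of "1/p"] by simp
  then show ?thesis
    unfolding pq_integral_def using p by (simp add: sums_iff algebra_simps)
qed

end

section \<open>The operator on quadratic polynomials\<close>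

definition kmean :: "real \<Rightarrow> real \<Rightarrow> real" where
  "kmean a y = (1 - y) / (1 - a*y)"

definition ksecond :: "real \<Rightarrow> real \<Rightarrow> real \<Rightarrow> real" where
  "ksecond a r y = kmean a y * kmean a (r*y)"

text \<open>For $y = r^{k+1}$ and $a = r^{n+1}$, \<^term>\<open>kmean a y\<close> is $[k+1]_r/[n+k+2]_r$,
  the mean of $pt$ under the $k$-th kernel, and \<^term>\<open>ksecond a r y\<close> the corresponding
  second moment.\<close>

lemma ksecond_eq: "ksecond a r y = (1 - y) * (1 - r*y) / ((1 - a*y) * (1 - a*r*y))"
  by (simp add: ksecond_def kmean_def mult.assoc)

context
  fixes r :: real
  assumes r: "0 < r" "r < 1"
begin

lemma qint_ratio_eq_kmean: "qint r (k+1) / qint r (n+k+2) = kmean (r^(n+1)) (r^(k+1))"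
  unfolding qint_ratio[OF r] kmean_def by (simp add: power_add[symmetric] add.commute add.left_commute)

lemma qbeta_normalization: "qint r (n+1) * (1-r) * qbinom r (n+k+1) k * qbeta r k n = 1"
proof -
  have "qbinom r (n+k+1) k = qfact r (n+k+1) / (qfact r k * (qfact r n * qint r (n+1)))"
    by (simp add: qbinom_def qfact_Suc)
  then show ?thesis
    using qfact_pos[OF r, of k] qfact_pos[OF r, of n] qfact_pos[OF r, of "n+k+1"] qint_pos[OF r, of "n+1"] r
    by (simp add: qbeta_def field_simps)
qed

lemma kernel_moment_1: "qint r (n+1) * (1-r) * qbinom r (n+k+1) k * qbeta r (k+1) n = kmean (r^(n+1)) (r^(k+1))"
proof -
  have "qint r (n+1) * (1-r) * qbinom r (n+k+1) k * qbeta r (k+1) n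
      = (qint r (n+1) * (1-r) * qbinom r (n+k+1) k * qbeta r k n) * (qint r (k+1) / qint r (n+k+2))"
    by (simp only: qbeta_Suc_left[OF r] mult.assoc)
  then show ?thesis by (simp only: qbeta_normalization qint_ratio_eq_kmean mult_1_left)
qed

lemma kernel_moment_2:
  "qint r (n+1) * (1-r) * qbinom r (n+k+1) k * qbeta r (k+2) n = ksecond (r^(n+1)) r (r^(k+1))"
proof -
  have "k + 2 = (k+1) + 1" by simp
  then have "qbeta r (k+2) n = qbeta r (k+1) n * (qint r (k+1+1) / qint r (n+(k+1)+2))"
    by (simp only: qbeta_Suc_left[OF r])
  also have "\<dots> = qbeta r (k+1) n * kmean (r^(n+1)) (r * r^(k+1))"
    unfolding qint_ratio_eq_kmean by simp
  finally show ?thesis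
    using kernel_moment_1[of n k] by (simp add: ksecond_def ac_simps)
qed

end

context
  fixes p r :: real and n :: nat
  assumes p: "0 < p" and r: "0 < r" "r < 1" and n: "n \<ge> 1"
begin

lemma pq_integral_b_basis_quadratic:
  "pq_integral p (r*p) 1 (\<lambda>t. b_basis p (r*p) n k t * (\<alpha> + \<beta>*t + \<gamma>*t^2))
     = (1-r) * (p^(2*k) * r^k * qbinom r (n+k+1) k
        * (\<alpha> * qbeta r k n + \<beta>/p * qbeta r (k+1) n + \<gamma>/p^2 * qbeta r (k+2) n))"
proof (rule pq_integral_eq_sums[OF p r])
  define C where "C = p^(2*k) * r^k * qbinom r (n+k+1) k"
  define Q where "Q j = qpoch r (r^(j+1)) n" for j
  have monomial: "r^j * b_basis p (r*p) n k (r^j/p) * (r^j/p)^i = C / p^i * (r^(j*(k+i+1)) * Q j)" for i j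
  proof -
    have "r^j * r^(k*(j+1)) * (r^j)^i = r^k * r^(j*(k+i+1))"
      by (simp flip: power_add power_mult add: algebra_simps)
    moreover have "r^j * b_basis p (r*p) n k (r^j/p) * (r^j/p)^i
        = p^(2*k) * qbinom r (n+k+1) k * (r^j * r^(k*(j+1)) * (r^j)^i) * Q j / p^i"
      unfolding b_basis_at_node[OF p r n] Q_def by (simp add: power_divide mult_ac)
    ultimately show ?thesis unfolding C_def by (simp add: mult_ac)
  qed
  have "(\<lambda>j. \<alpha> * (C * (r^(j*(k+1)) * Q j)) + \<beta> * (C / p * (r^(j*(k+1+1)) * Q j))
            + \<gamma> * (C / p^2 * (r^(j*(k+2+1)) * Q j)))
      sums (\<alpha> * (C * qbeta r k n) + \<beta> * (C / p * qbeta r (k+1) n)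
        + \<gamma> * (C / p^2 * qbeta r (k+2) n))"
    unfolding Q_def by (intro sums_add sums_mult qbeta_sums[OF r])
  moreover have "r^j * (b_basis p (r*p) n k (r^j/p) * (\<alpha> + \<beta>*(r^j/p) + \<gamma>*(r^j/p)^2))
      = \<alpha> * (C * (r^(j*(k+1)) * Q j)) + \<beta> * (C / p * (r^(j*(k+1+1)) * Q j))
        + \<gamma> * (C / p^2 * (r^(j*(k+2+1)) * Q j))" for j
  proof -
    have lin: "A * (B * (\<alpha> + \<beta>*t + \<gamma>*t^2))
        = \<alpha> * (A * B * t^0) + \<beta> * (A * B * t^1) + \<gamma> * (A * B * t^2)"
      for A B t :: real
      by (simp add: algebra_simps)
    show ?thesis unfolding lin monomial by simp
  qed
  ultimately show "(\<lambda>j. r^j * (b_basis p (r*p) n k (r^j/p) * (\<alpha> + \<beta>*(r^j/p) +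
      \<gamma>*(r^j/p)^2)))
      sums (p^(2*k) * r^k * qbinom r (n+k+1) k
        * (\<alpha> * qbeta r k n + \<beta>/p * qbeta r (k+1) n + \<gamma>/p^2 * qbeta r (k+2) n))"
    unfolding C_def by (simp add: algebra_simps)
qed

lemma M_term_quadratic:
  "qint r (n+1) * (m_basis p (r*p) n k x * (1/(p*(r*p))^k)
      * pq_integral p (r*p) 1 (\<lambda>t. b_basis p (r*p) n k t * (\<alpha> + \<beta>*t + \<gamma>*t^2)))
   = qnb_weight r n x k
      * (\<alpha> + \<beta>/p * kmean (r^(n+1)) (r^(k+1)) + \<gamma>/p^2 * ksecond (r^(n+1)) r (r^(k+1)))"
proof -
  define W where "W = qint r (n+1) * (1-r) * qbinom r (n+k+1) k"
  have pk: "(p*(r*p))^k = p^(2*k) * r^k"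
    by (simp add: power_mult_distrib power_mult power2_eq_square mult_ac)
  have "p^(2*k) * r^k \<noteq> 0" using p r by simp
  then have "qint r (n+1) * (m_basis p (r*p) n k x * (1/(p*(r*p))^k)
        * pq_integral p (r*p) 1 (\<lambda>t. b_basis p (r*p) n k t * (\<alpha> + \<beta>*t + \<gamma>*t^2)))
      = m_basis p (r*p) n k x * (\<alpha> * (W * qbeta r k n) + \<beta>/p * (W * qbeta r (k+1) n)
        + \<gamma>/p^2 * (W * qbeta r (k+2) n))"
    unfolding pq_integral_b_basis_quadratic pk W_def by (simp add: field_simps)
  then show ?thesis
    unfolding W_def qbeta_normalization[OF r] kernel_moment_1[OF r] kernel_moment_2[OF r]
      m_basis_eq_qnb_weight[OF p r] by simp
qed

lemma M_op_quadratic: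
  assumes x: "x \<noteq> 1"
    and S: "(\<lambda>k. qnb_weight r n x k * (\<alpha> + \<beta>/p * kmean (r^(n+1)) (r^(k+1)) +
        \<gamma>/p^2 * ksecond (r^(n+1)) r (r^(k+1))))
      sums S"
  shows "M_op p (r*p) n (\<lambda>t. \<alpha> + \<beta>*t + \<gamma>*t^2) x = S"
proof -
  define summand where "summand k = m_basis p (r*p) n k x * (1/(p*(r*p))^k)
    * pq_integral p (r*p) 1 (\<lambda>t. b_basis p (r*p) n k t * (\<alpha> + \<beta>*t + \<gamma>*t^2))" for k
  have pos: "qint r (n+1) > 0" using qint_pos[OF r] by simp
  have "summand k = qnb_weight r n x k * (\<alpha> + \<beta>/p * kmean (r^(n+1)) (r^(k+1))
      + \<gamma>/p^2 * ksecond (r^(n+1)) r (r^(k+1))) / qint r (n+1)" for k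
    using M_term_quadratic[of k x \<alpha> \<beta> \<gamma>] pos by (simp add: summand_def field_simps)
  then have "summand sums (S / qint r (n+1))" using sums_divide[OF S] by presburger
  then have "M_op p (r*p) n (\<lambda>t. \<alpha> + \<beta>*t + \<gamma>*t^2) x
      = pq_int p (r*p) (n+1) / p^n * (S / qint r (n+1))"
    unfolding M_op_def summand_def using x by (simp add: sums_iff)
  then show ?thesis unfolding pq_int_eq_qint[OF p r] using pos p by simp
qed

end

section \<open>Concavity estimates for the kernel moments\<close>

lemma one_minus_mult_pos:
  fixes a y :: real
  assumes "0 \<le> a" "a < 1" "0 \<le> y" "y \<le> 1"
  shows "1 - a*y > 0"
proof -
  have "a*y \<le> a" using assms by (intro mult_right_le_one_le) auto
  then show ?thesis using assms by linarith
qed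

lemma kmean_le_tangent:
  fixes a y y0 :: real
  assumes "0 < a" "a < 1" "0 \<le> y" "y \<le> 1" "0 \<le> y0" "y0 \<le> 1"
  shows "kmean a y \<le> kmean a y0 - (1-a)/(1-a*y0)^2 * (y - y0)"
proof -
  have d1: "1 - a*y > 0" "1 - a*y0 > 0" using assms one_minus_mult_pos by auto
  have eq: "kmean a y0 - (1-a)/(1-a*y0)^2 * (y - y0) - kmean a y = a*(1-a)*(y-y0)^2/((1-a*y)*(1-a*y0)^2)"
  proof -
    define A where "A = 1 - a*y"
    define B where "B = 1 - a*y0"
    have n: "A \<noteq> 0" "B \<noteq> 0" using d1 by (auto simp: A_def B_def)
    have fr: "(1-y0)/B - (1-a)/B^2 * (y-y0) - (1-y)/A = ((1-y0)*A*B - (1-a)*(y-y0)*A - (1-y)*B^2)/(A*B^2)"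
      using n by (simp add: field_simps power2_eq_square)
    have num: "(1-y0)*A*B - (1-a)*(y-y0)*A - (1-y)*B^2 = a*(1-a)*(y-y0)^2"
      unfolding A_def B_def by (simp add: algebra_simps power2_eq_square)
    show ?thesis unfolding kmean_def A_def[symmetric] B_def[symmetric] fr num ..
  qed
  have "a*(1-a)*(y-y0)^2/((1-a*y)*(1-a*y0)^2) \<ge> 0" using assms d1 by simp
  then show ?thesis using eq by linarith
qed

lemma y_kmean_le_tangent:
  fixes a y y0 :: real
  assumes "0 < a" "a < 1" "0 \<le> y" "y \<le> 1" "0 \<le> y0" "y0 \<le> 1"
  shows "y * kmean a y \<le> y0 * kmean a y0 + (1 - 2*y0 + a*y0^2)/(1-a*y0)^2 * (y - y0)"
proof -
  have d1: "1 - a*y > 0" "1 - a*y0 > 0" using assms one_minus_mult_pos by auto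
  have eq: "y0 * kmean a y0 + (1 - 2*y0 + a*y0^2)/(1-a*y0)^2 * (y - y0) - y * kmean a y
      = (1-a)*(y-y0)^2/((1-a*y)*(1-a*y0)^2)"
  proof -
    define A where "A = 1 - a*y"
    define B where "B = 1 - a*y0"
    have n: "A \<noteq> 0" "B \<noteq> 0" using d1 by (auto simp: A_def B_def)
    have fr: "y0*(1-y0)/B + (1 - 2*y0 + a*y0^2)/B^2 * (y-y0) - y*(1-y)/A
       = (y0*(1-y0)*A*B + (1 - 2*y0 + a*y0^2)*(y-y0)*A - y*(1-y)*B^2)/(A*B^2)"
      using n by (simp add: field_simps power2_eq_square)
    have num: "y0*(1-y0)*A*B + (1 - 2*y0 + a*y0^2)*(y-y0)*A - y*(1-y)*B^2 = (1-a)*(y-y0)^2"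
      unfolding A_def B_def by (simp add: algebra_simps power2_eq_square)
    show ?thesis unfolding kmean_def A_def[symmetric] B_def[symmetric] times_divide_eq_right fr num ..
  qed
  have "(1-a)*(y-y0)^2/((1-a*y)*(1-a*y0)^2) \<ge> 0" using assms d1 by simp
  then show ?thesis using eq by linarith
qed

lemma ksecond_minus_kmean_sq_le:
  fixes a r y :: real
  assumes "0 < a" "a < 1" "0 < r" "r < 1" "0 \<le> y" "y \<le> r"
  shows "ksecond a r y - (kmean a y)^2 \<le> (1-a)*(1-r)/((1-a*r)*(1-a*r^2)) * (y * kmean a y)"
proof -
  have y1: "y \<le> 1" using assms by simp
  have ry: "0 \<le> r*y" "r*y \<le> 1" using assms by (auto intro: mult_le_one)
  have d1: "1 - a*y > 0" "1 - a*(r*y) > 0" using assms one_minus_mult_pos y1 ry by auto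
  define A where "A = 1 - a*y"
  define C where "C = 1 - a*r*y"
  have An: "A > 0" "C > 0" using d1 by (auto simp: A_def C_def mult.assoc)
  have eq: "ksecond a r y - (kmean a y)^2 = (1-a)*(1-r)*(y*(1-y)/A) / (A*C)"
  proof -
    have fr: "(1-y)*(1-r*y)/(A*C) - ((1-y)/A)^2 = ((1-y)*(1-r*y)*A - (1-y)^2*C)/(A^2*C)"
      using An by (simp add: field_simps power2_eq_square)
    have num: "(1-y)*(1-r*y)*A - (1-y)^2*C = (1-a)*(1-r)*(y*(1-y))"
      unfolding A_def C_def by (simp add: algebra_simps power2_eq_square)
    have "ksecond a r y - (kmean a y)^2 = (1-a)*(1-r)*(y*(1-y))/(A^2*C)"
      unfolding ksecond_eq kmean_def A_def[symmetric] C_def[symmetric] fr num ..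
    also have "\<dots> = (1-a)*(1-r)*(y*(1-y)/A) / (A*C)" using An by (simp add: field_simps power2_eq_square)
    finally show ?thesis .
  qed
  have ar: "0 < 1 - a*r" "0 < 1 - a*r^2"
    using one_minus_mult_pos[of a r] one_minus_mult_pos[of a "r^2"] assms by (auto simp: power_le_one)
  have AC: "(1-a*r)*(1-a*r^2) \<le> A*C"
  proof -
    have "1 - a*r \<le> A" unfolding A_def using assms by (simp add: mult_left_mono)
    moreover have "1 - a*r^2 \<le> C" unfolding C_def using assms
      by (simp add: power2_eq_square mult_left_mono mult.assoc)
    ultimately show ?thesis using ar by (intro mult_mono) auto
  qed
  have nn: "0 \<le> (1-a)*(1-r)*(y*(1-y)/A)" using assms An y1 by simp
  have "(1-a)*(1-r)*(y*(1-y)/A) / (A*C) \<le> (1-a)*(1-r)*(y*(1-y)/A) / ((1-a*r)*(1-a*r^2))"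
    using AC nn ar An by (intro divide_left_mono) (auto intro!: mult_pos_pos)
  also have "\<dots> = (1-a)*(1-r)/((1-a*r)*(1-a*r^2)) * (y * kmean a y)" unfolding A_def
      by (simp add: kmean_def ac_simps)
  finally show ?thesis using eq by simp
qed

lemma kmean_diff_sq_le:
  fixes a r y y0 :: real
  assumes "0 < a" "a < 1" "0 < r" "r < 1" "0 \<le> y" "y \<le> r" "0 \<le> y0" "y0 \<le> 1"
  shows "(kmean a y - kmean a y0)^2 \<le> (1-a)^2/((1-a*r)^2*(1-a*y0)^2) * (y-y0)^2"
proof -
  have y1: "y \<le> 1" using assms by simp
  have d1: "1 - a*y > 0" "1 - a*y0 > 0" using assms one_minus_mult_pos y1 by auto
  define A where "A = 1 - a*y"
  define B where "B = 1 - a*y0"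
  have An: "A > 0" "B > 0" using d1 by (auto simp: A_def B_def)
  have eq: "kmean a y - kmean a y0 = (-(1-a)*(y-y0))/(A*B)"
  proof -
    have fr: "(1-y)/A - (1-y0)/B = ((1-y)*B - (1-y0)*A)/(A*B)" using An by (simp add: field_simps)
    have num: "(1-y)*B - (1-y0)*A = -(1-a)*(y-y0)" unfolding A_def B_def by (simp add: algebra_simps)
    show ?thesis unfolding kmean_def A_def[symmetric] B_def[symmetric] fr num ..
  qed
  have ar: "0 < 1 - a*r" using one_minus_mult_pos[of a r] assms by auto
  have Ar: "1 - a*r \<le> A" unfolding A_def using assms by (simp add: mult_left_mono)
  have "(kmean a y - kmean a y0)^2 = (1-a)^2*(y-y0)^2/(A^2*B^2)" unfolding eq using An
    by (simp add: power_divide power_mult_distrib power2_eq_square algebra_simps)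
  also have "\<dots> \<le> (1-a)^2*(y-y0)^2/((1-a*r)^2*B^2)"
  proof (rule divide_left_mono)
    show "(1-a*r)^2*B^2 \<le> A^2*B^2" using Ar ar An by (intro mult_right_mono power_mono) auto
  qed (use ar An in auto)
  also have "\<dots> = (1-a)^2/((1-a*r)^2*(1-a*y0)^2) * (y-y0)^2" by (simp add: B_def)
  finally show ?thesis .
qed

lemma kmean_range:
  fixes a y :: real assumes "0 < a" "a < 1" "0 \<le> y" "y \<le> 1"
  shows "0 \<le> kmean a y" "kmean a y \<le> 1"
proof -
  have d: "1 - a*y > 0" using one_minus_mult_pos assms by auto
  show "0 \<le> kmean a y" unfolding kmean_def using d assms by simp
  have "1 - y \<le> 1 - a*y" using assms by (simp add: mult_left_le_one_le)
  then show "kmean a y \<le> 1" unfolding kmean_def using d by simp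
qed

lemma ksecond_range:
  fixes a r y :: real assumes "0 < a" "a < 1" "0 < r" "r < 1" "0 \<le> y" "y \<le> 1"
  shows "0 \<le> ksecond a r y" "ksecond a r y \<le> 1"
proof -
  have "0 \<le> r*y" "r*y \<le> 1" using assms by (auto intro: mult_le_one)
  then have "0 \<le> kmean a (r*y)" "kmean a (r*y) \<le> 1" using kmean_range assms by auto
  then show "0 \<le> ksecond a r y" "ksecond a r y \<le> 1"
    unfolding ksecond_def using kmean_range[OF assms(1,2,5,6)] by (auto intro: mult_le_one)
qed

text \<open>Writing $c^2H - 2xcG + x^2 = c^2(H - G^2) + (cG - x)^2$ and expanding $cG(y) - x$ around $y_0$,
  each piece is dominated by a quadratic polynomial in $y - y_0$.\<close>

lemma psi2_term_le:
  fixes a r y y0 c x :: real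
  assumes a: "0 < a" "a < 1" and r: "0 < r" "r < 1" and y: "0 \<le> y" "y \<le> r" and y0: "0
      \<le> y0" "y0 \<le> r"
    and c: "0 \<le> c" and S0: "0 \<le> c * kmean a y0 - x"
  shows "c^2 * ksecond a r y - 2*x*c*kmean a y + x^2 \<le>
     c^2*((1-a)*(1-r)/((1-a*r)*(1-a*r^2)))*(y0 * kmean a y0 + (1 - 2*y0 + a*y0^2)/(1-a*y0)^2*(y-y0))
     + (c * kmean a y0 - x)^2 + 2*(c * kmean a y0 - x)*c*(-((1-a)/(1-a*y0)^2))*(y-y0)
     + c^2*((1-a)^2/((1-a*r)^2*(1-a*y0)^2))*(y-y0)^2"
proof -
  define S where "S = c * kmean a y0 - x"
  define K where "K = (1-a)*(1-r)/((1-a*r)*(1-a*r^2))"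
  define G where "G = kmean a y"
  define G0 where "G0 = kmean a y0"
  define f1 where "f1 = (1 - 2*y0 + a*y0^2)/(1-a*y0)^2"
  define G1 where "G1 = -((1-a)/(1-a*y0)^2)"
  define D where "D = (1-a)^2/((1-a*r)^2*(1-a*y0)^2)"
  define H where "H = ksecond a r y"
  define F0 where "F0 = y0 * kmean a y0"
  have y1: "y \<le> 1" "y0 \<le> 1" using y y0 r by auto
  have ar: "0 < 1 - a*r" "0 < 1 - a*r^2"
    using one_minus_mult_pos[of a r] one_minus_mult_pos[of a "r^2"] a r by (auto simp: power_le_one)
  have K0: "K \<ge> 0" unfolding K_def using a r ar by simp
  have split: "c^2 * H - 2*x*c*G + x^2 = c^2*(H - G^2) + (S^2 + 2*S*c*(G - G0) + c^2*(G-G0)^2)"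
    unfolding S_def G0_def by (simp add: algebra_simps power2_eq_square)
  have variance: "c^2*(H - G^2) \<le> c^2*K*(F0 + f1*(y-y0))"
  proof -
    have "H - G^2 \<le> K * (y * kmean a y)" unfolding G_def K_def H_def
        using ksecond_minus_kmean_sq_le[OF a r y] .
    also have "\<dots> \<le> K*(F0 + f1*(y-y0))" unfolding F0_def f1_def
      using y_kmean_le_tangent[OF a y(1) y1(1) y0(1) y1(2)] K0 by (intro mult_left_mono) auto
    finally show ?thesis by (simp add: mult.assoc mult_left_mono)
  qed
  have cross: "2*S*c*(G - G0) \<le> 2*S*c*G1*(y-y0)"
  proof -
    have "G - G0 \<le> G1*(y-y0)" unfolding G_def G0_def G1_def
      using kmean_le_tangent[OF a y(1) y1(1) y0(1) y1(2)] by simp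
    moreover have "0 \<le> 2*S*c" using S0 c S_def by simp
    ultimately have "(2*S*c)*(G - G0) \<le> (2*S*c)*(G1*(y-y0))" by (rule mult_left_mono)
    then show ?thesis by (simp add: mult.assoc)
  qed
  have square: "c^2*(G-G0)^2 \<le> c^2*D*(y-y0)^2"
  proof -
    have "(G-G0)^2 \<le> D*(y-y0)^2" unfolding G_def G0_def D_def using kmean_diff_sq_le[OF a r y y0(1) y1(2)] .
    then have "c^2*(G-G0)^2 \<le> c^2*(D*(y-y0)^2)" by (rule mult_left_mono) simp
    then show ?thesis by (simp add: mult.assoc)
  qed
  have "c^2 * H - 2*x*c*G + x^2 \<le> c^2*K*(F0 + f1*(y-y0)) + S^2 + 2*S*c*G1*(y-y0) + c^2*D*(y-y0)^2"
    using split variance cross square by linarith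
  then show ?thesis unfolding S_def K_def G_def G0_def f1_def G1_def D_def H_def F0_def .
qed

section \<open>The kernel moments at the mean node\<close>

context
  fixes r :: real and n :: nat and x :: real
  assumes r: "0 < r" "r < 1" and x: "0 \<le> x" "x < 1"
begin

lemma one_minus_power_Suc_eqs:
  "1 - r^(n+1) = (1-r) * qint r (n+1)"
  "1 - r^(n+1) * r = (1-r) * qint r (n+2)"
  "1 - r^(n+1) * r^2 = (1-r) * qint r (n+3)"
proof -
  have "r^(n+2) = r^(n+1) * r" "r^(n+3) = r^(n+1) * r^2"
    by (simp_all add: power_add eval_nat_numeral mult_ac)
  then show "1 - r^(n+1) = (1-r) * qint r (n+1)" "1 - r^(n+1) * r = (1-r) * qint r (n+2)"
    "1 - r^(n+1) * r^2 = (1-r) * qint r (n+3)"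
    using one_minus_power_eq[of r] r by (metis less_irrefl)+
qed

lemma qint_Suc_Suc_eq: "qint r (n+2) = qint r (n+1) + r^(n+1)"
  using r by (simp add: qint_def field_simps power_add eval_nat_numeral)

lemma qint_minus_power_x_bounds:
  "qint r (n+1) \<le> qint r (n+2) - r^(n+1) * x" "qint r (n+2) - r^(n+1) * x > 0"
proof -
  have "r^(n+1) * x \<le> r^(n+1)" using x r by (simp add: mult_left_le_one_le)
  then show "qint r (n+1) \<le> qint r (n+2) - r^(n+1) * x" using qint_Suc_Suc_eq by simp
  then show "qint r (n+2) - r^(n+1) * x > 0" using qint_ge_1[OF r, of "n+1"] by simp
qed

lemma one_minus_power_Suc_nb_mean:
  "1 - r^(n+1) * nb_mean r n x = (1-r) * (qint r (n+2) - r^(n+1) * x) / (1 - r^(n+1) * x)"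
proof -
  have "1 - r^(n+1) * x > 0" using one_minus_power_Suc_x_pos[OF r x] by simp
  then have "1 - r^(n+1) * nb_mean r n x = (1 - r^(n+1) * r - (1-r) * r^(n+1) * x) / (1 - r^(n+1) * x)"
    unfolding nb_mean_def by (simp add: field_simps)
  then show ?thesis unfolding one_minus_power_Suc_eqs by (simp add: algebra_simps)
qed

lemma kmean_nb_mean_eq:
  "kmean (r^(n+1)) (nb_mean r n x) = (1 - x + x * qint r (n+1)) / (qint r (n+2) - r^(n+1) * x)"
proof -
  have d: "1 - r^(n+1) * x > 0" using one_minus_power_Suc_x_pos[OF r x] by simp
  then have "1 - nb_mean r n x = (1 - r*(1-x) - r^(n+1) * x) / (1 - r^(n+1) * x)"
    unfolding nb_mean_def by (simp add: field_simps)
  also have "1 - r*(1-x) - r^(n+1) * x = (1-r) * (1 - x + x * qint r (n+1))"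
  proof -
    have "(1-r) * (1 - x + x * qint r (n+1)) = (1-r) * (1-x) + x * ((1-r) * qint r (n+1))"
      by (simp add: algebra_simps)
    then show ?thesis unfolding one_minus_power_Suc_eqs(1)[symmetric] by (simp add: algebra_simps)
  qed
  finally show ?thesis
    unfolding kmean_def one_minus_power_Suc_nb_mean using d r qint_minus_power_x_bounds by simp
qed

lemma kmean_nb_mean_minus_x:
  "kmean (r^(n+1)) (nb_mean r n x) - x = (1-x) * (1 - r^(n+1) * x) / (qint r (n+2) - r^(n+1) * x)"
proof -
  have "1 - x + x * qint r (n+1) - x * (qint r (n+2) - r^(n+1) * x) = (1-x) * (1 - r^(n+1) * x)"
    unfolding qint_Suc_Suc_eq by (simp add: algebra_simps)
  then show ?thesis
    unfolding kmean_nb_mean_eq using qint_minus_power_x_bounds(2) by (simp add: field_simps)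
qed

lemma kmean_nb_mean_ge: "x \<le> kmean (r^(n+1)) (nb_mean r n x)"
  using kmean_nb_mean_minus_x qint_minus_power_x_bounds(2) one_minus_power_Suc_x_pos[OF r x] x
  by (smt (verit) divide_nonneg_pos mult_nonneg_nonneg)

lemma kmean_nb_mean_minus_x_le: "kmean (r^(n+1)) (nb_mean r n x) - x \<le> (1-x) / qint r (n+2)"
proof -
  define E where "E = qint r (n+2) - r^(n+1) * x"
  have E: "E > 0" using qint_minus_power_x_bounds(2) by (simp add: E_def)
  have "r^(n+1) * x * 1 \<le> r^(n+1) * x * qint r (n+2)"
    using qint_ge_1[OF r, of "n+2"] r x by (intro mult_left_mono) auto
  then have "(1 - r^(n+1) * x) * qint r (n+2) \<le> E" unfolding E_def by (simp add: algebra_simps)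
  then have "(1-x) * ((1 - r^(n+1) * x) * qint r (n+2)) \<le> (1-x) * E" using x by (intro mult_left_mono) auto
  then show ?thesis
    unfolding kmean_nb_mean_minus_x E_def[symmetric] using E qint_ge_1[OF r, of "n+2"]
    by (simp add: field_simps)
qed

lemma variance_coeff_eq:
  "(1 - r^(n+1)) * (1-r) / ((1 - r^(n+1) * r) * (1 - r^(n+1) * r^2))
    = qint r (n+1) / (qint r (n+2) * qint r (n+3))"
proof -
  have "(d*v)*d/((d*B)*(d*C)) = v/(B*C)" if "d \<noteq> 0" "B \<noteq> 0" "C \<noteq> 0" for d v B C :: real
    using that by (simp add: field_simps)
  then show ?thesis
    unfolding one_minus_power_Suc_eqs using r qint_ge_1[OF r, of "n+2"] qint_ge_1[OF r, of "n+3"] by simp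
qed

lemma variance_term_1_le:
  "(1 - r^(n+1)) * (1-r) / ((1 - r^(n+1) * r) * (1 - r^(n+1) * r^2))
      * (nb_mean r n x * kmean (r^(n+1)) (nb_mean r n x))
   \<le> r * (1 - x + x * qint r (n+1)) / (qint r (n+2) * qint r (n+3))"
proof -
  define N1 N2 N3 where "N1 = qint r (n+1)" and "N2 = qint r (n+2)" and "N3 = qint r (n+3)"
  define U where "U = 1 - r^(n+1) * x"
  define E where "E = N2 - r^(n+1) * x"
  have N: "N1 \<ge> 1" "N2 \<ge> 1" "N3 \<ge> 1" using qint_ge_1[OF r] by (auto simp: N1_def N2_def N3_def)
  have U: "U > 0" "1 - x \<le> U"
    using one_minus_power_Suc_x_pos[OF r x] power_mult_x_bounds(2)[OF r x, of "n+1"] by (auto simp: U_def)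
  have E: "E > 0" "N1 \<le> E" using qint_minus_power_x_bounds by (auto simp: E_def N1_def N2_def)
  have regroup: "v/(B*C) * ((r*s/U) * (g/E)) = (r*g/(B*C)) * (v*s/(U*E))"
    if "U \<noteq> 0" "E \<noteq> 0" "B \<noteq> 0" "C \<noteq> 0" for v B C s g U E :: real
    using that by (simp add: field_simps)
  have "(1 - r^(n+1)) * (1-r) / ((1 - r^(n+1) * r) * (1 - r^(n+1) * r^2))
      * (nb_mean r n x * kmean (r^(n+1)) (nb_mean r n x))
      = (r * (1 - x + x * N1) / (N2 * N3)) * (N1 * (1-x) / (U * E))"
    unfolding variance_coeff_eq kmean_nb_mean_eq
    unfolding nb_mean_def N1_def[symmetric] N2_def[symmetric] N3_def[symmetric] U_def[symmetric]
        E_def[symmetric]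
    by (rule regroup) (use U E N in auto)
  also have "\<dots> \<le> (r * (1 - x + x * N1) / (N2 * N3)) * 1"
  proof (rule mult_left_mono)
    have "N1 * (1-x) \<le> E * U" using U E N x by (intro mult_mono) auto
    then show "N1 * (1-x) / (U * E) \<le> 1" using U E by (simp add: divide_le_eq mult.commute)
    show "0 \<le> r * (1 - x + x * N1) / (N2 * N3)" using r N x by simp
  qed
  finally show ?thesis unfolding N1_def N2_def N3_def by simp
qed

lemma variance_term_2_le:
  "(1 - r^(n+1))^2 / ((1 - r^(n+1) * r)^2 * (1 - r^(n+1) * nb_mean r n x)^2)
    * (r^2 * (1-x) * (1 - r*x) / ((1 - r^(n+1) * x) * (1 - r^(n+1) * r * x)) - (nb_mean r n x)^2)
   \<le> r^2 * qint r (n+1) * x / (qint r (n+2))^2"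
proof -
  define N1 N2 where "N1 = qint r (n+1)" and "N2 = qint r (n+2)"
  define U W E where "U = 1 - r^(n+1) * x" and "W = 1 - r^(n+1) * r * x" and "E = N2 - r^(n+1) * x"
  have N: "N1 \<ge> 1" "N2 \<ge> 1" using qint_ge_1[OF r] by (auto simp: N1_def N2_def)
  have U: "U > 0" "1 - x \<le> U"
    using one_minus_power_Suc_x_pos[OF r x] power_mult_x_bounds(2)[OF r x, of "n+1"] by (auto simp: U_def)
  have W: "W > 0" "1 - x \<le> W"
    using one_minus_power_Suc_x_pos[OF r x] power_mult_x_bounds(2)[OF r x, of "n+2"]
    by (auto simp: W_def mult_ac)
  have E: "E > 0" "N1 \<le> E" using qint_minus_power_x_bounds by (auto simp: E_def N1_def N2_def)
  have nz: "1 - r \<noteq> 0" using r by simp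
  have var: "r^2 * (1-x) * (1 - r*x) / ((1 - r^(n+1) * x) * (1 - r^(n+1) * r * x)) - (nb_mean r n x)^2
      = r^2 * x * (1-x) * (1 - r^(n+1)) * (1-r) / (U^2 * W)"
  proof -
    have fraction: "r^2 * (1-x) * (1 - r*x) / (U * W) - (r * (1-x) / U)^2
        = r^2 * (1-x) * ((1 - r*x) * U - (1-x) * W) / (U^2 * W)"
      using U W by (simp add: field_simps power2_eq_square)
    have numerator: "(1 - r*x) * U - (1-x) * W = x * (1 - r^(n+1)) * (1-r)"
      unfolding U_def W_def by (simp add: algebra_simps)
    have mean: "nb_mean r n x = r * (1-x) / U" by (simp add: nb_mean_def U_def)
    show ?thesis
      unfolding mean U_def[symmetric] W_def[symmetric] fraction numerator by (simp add: mult_ac)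
  qed
  have regroup: "(d*v)^2/((d*B)^2*(d*E/U)^2) * (r^2*x*s*(d*v)*d/(U^2*W)) = (r^2*v*x/B^2)*(v^2*s/(E^2*W))"
    if "d \<noteq> 0" "B \<noteq> 0" "E \<noteq> 0" "U \<noteq> 0" "W \<noteq> 0" for d v B E U W s :: real
    using that by (simp add: field_simps power2_eq_square)
  have "(1 - r^(n+1))^2 / ((1 - r^(n+1) * r)^2 * (1 - r^(n+1) * nb_mean r n x)^2)
      * (r^2 * (1-x) * (1 - r*x) / ((1 - r^(n+1) * x) * (1 - r^(n+1) * r * x)) - (nb_mean r n x)^2)
      = ((1-r) * N1)^2 / (((1-r) * N2)^2 * ((1-r) * E / U)^2)
        * (r^2 * x * (1-x) * ((1-r) * N1) * (1-r) / (U^2 * W))"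
    unfolding var one_minus_power_Suc_nb_mean
    unfolding one_minus_power_Suc_eqs(1,2) N1_def[symmetric] N2_def[symmetric] U_def[symmetric]
        E_def[symmetric] ..
  also have "\<dots> = (r^2 * N1 * x / N2^2) * (N1^2 * (1-x) / (E^2 * W))"
    by (rule regroup) (use nz U W E N in auto)
  also have "\<dots> \<le> (r^2 * N1 * x / N2^2) * 1"
  proof (rule mult_left_mono)
    have "N1^2 * (1-x) \<le> E^2 * W" using U W E N x by (intro mult_mono power_mono) auto
    then show "N1^2 * (1-x) / (E^2 * W) \<le> 1" using W E by (simp add: divide_le_eq mult.commute)
    show "0 \<le> r^2 * N1 * x / N2^2" using r N x by simp
  qed
  finally show ?thesis unfolding N1_def N2_def by simp
qed

end

section \<open>Estimates for the first two central moments\<close>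

context
  fixes p r :: real and n :: nat and x :: real
  assumes p: "0 < p" and r: "0 < r" "r < 1" and n: "n \<ge> 1" and x: "0 \<le> x" "x < 1"
begin

lemma node_bounds: "0 \<le> r^(k+1)" "r^(k+1) \<le> r"
proof -
  show "0 \<le> r^(k+1)" using r by simp
  have "r^(k+1) \<le> r^1" using r by (intro power_decreasing) auto
  then show "r^(k+1) \<le> r" by simp
qed

lemma M_op_quadratic_le:
  assumes le: "\<And>k. \<alpha> + \<beta>/p * kmean (r^(n+1)) (r^(k+1))
      + \<gamma>/p^2 * ksecond (r^(n+1)) r (r^(k+1)) \<le> g k"
    and g: "(\<lambda>k. qnb_weight r n x k * g k) sums T"
  shows "M_op p (r*p) n (\<lambda>t. \<alpha> + \<beta>*t + \<gamma>*t^2) x \<le> T"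
proof -
  define f where "f k = \<alpha> + \<beta>/p * kmean (r^(n+1)) (r^(k+1))
      + \<gamma>/p^2 * ksecond (r^(n+1)) r (r^(k+1))" for k
  define B where "B = \<bar>\<alpha>\<bar> + \<bar>\<beta>/p\<bar> + \<bar>\<gamma>/p^2\<bar>"
  have f_bound: "\<bar>f k\<bar> \<le> B" for k
  proof -
    have y: "0 \<le> r^(k+1)" "r^(k+1) \<le> 1" using node_bounds[of k] r by linarith+
    have "\<bar>kmean (r^(n+1)) (r^(k+1))\<bar> \<le> 1" "\<bar>ksecond (r^(n+1)) r (r^(k+1))\<bar> \<le> 1"
      using kmean_range[OF power_Suc_bounds(1,2)[OF r] y] ksecond_range[OF power_Suc_bounds(1,2)[OF r] r y]
      by auto
    moreover have "\<bar>u * v\<bar> \<le> \<bar>u\<bar>" if "\<bar>v\<bar> \<le> 1" for u v :: real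
      using that by (simp add: abs_mult mult_right_le_one_le)
    ultimately have "\<bar>\<beta>/p * kmean (r^(n+1)) (r^(k+1))\<bar> \<le> \<bar>\<beta>/p\<bar>"
      "\<bar>\<gamma>/p^2 * ksecond (r^(n+1)) r (r^(k+1))\<bar> \<le> \<bar>\<gamma>/p^2\<bar>"
      by blast+
    then show ?thesis unfolding f_def B_def by linarith
  qed
  have summable: "summable (\<lambda>k. qnb_weight r n x k * f k)"
  proof (rule summable_comparison_test)
    show "summable (\<lambda>k. qnb_weight r n x k * B)"
      using qnb_weight_sums_1[OF r x] by (intro summable_mult2) (simp add: sums_iff)
    show "\<exists>N. \<forall>k\<ge>N. norm (qnb_weight r n x k * f k) \<le> qnb_weight r n x k * B"
      using f_bound qnb_weight_nonneg[OF r x] by (simp add: abs_mult mult_left_mono)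
  qed
  then have "M_op p (r*p) n (\<lambda>t. \<alpha> + \<beta>*t + \<gamma>*t^2) x
      = suminf (\<lambda>k. qnb_weight r n x k * f k)"
    using x by (intro M_op_quadratic[OF p r n]) (auto simp: f_def summable_sums)
  also have "\<dots> \<le> suminf (\<lambda>k. qnb_weight r n x k * g k)"
  proof (rule suminf_le[OF _ summable])
    show "qnb_weight r n x k * f k \<le> qnb_weight r n x k * g k" for k
      using le[of k] qnb_weight_nonneg[OF r x] unfolding f_def by (rule mult_left_mono)
    show "summable (\<lambda>k. qnb_weight r n x k * g k)" using g by (rule sums_summable)
  qed
  also have "\<dots> = T" using g by (rule sums_unique[symmetric])
  finally show ?thesis .
qed

lemma M_op_psi1_le: "M_op p (r*p) n (\<lambda>t. t - x) x \<le> 1/p * kmean (r^(n+1)) (nb_mean r n x) - x"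
proof -
  define A m where "A = r^(n+1)" and "m = nb_mean r n x"
  define G1 where "G1 = -((1-A)/(1-A*m)^2)"
  define E2 where "E2 = r^2 * (1-x) * (1 - r*x) / ((1 - A*x) * (1 - A*r*x))"
  have m: "0 \<le> m" "m \<le> 1" using nb_mean_bounds[OF r x, of n] r unfolding m_def by linarith+
  have "(\<lambda>k. qnb_weight r n x k
        * ((1/p * kmean A m - x) + 1/p * G1 * (r^(k+1) - m) + 0 * (r^(k+1) - m)^2))
      sums ((1/p * kmean A m - x) + 0 * (E2 - m^2))"
    unfolding A_def m_def E2_def
    by (rule sums_quadratic_centered[OF qnb_weight_sums_1[OF r x] qnb_weight_moment_1[OF r x]
        qnb_weight_moment_2[OF r x n]])
  moreover have "-x + 1/p * kmean A (r^(k+1)) + 0/p^2 * ksecond A r (r^(k+1))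
      \<le> (1/p * kmean A m - x) + 1/p * G1 * (r^(k+1) - m) + 0 * (r^(k+1) - m)^2" for k
  proof -
    have "r^(k+1) \<le> 1" using node_bounds(2)[of k] r by linarith
    then have "kmean A (r^(k+1)) \<le> kmean A m + G1 * (r^(k+1) - m)"
      using kmean_le_tangent[OF power_Suc_bounds(1,2)[OF r] node_bounds(1) _ m] unfolding A_def G1_def by simp
    then have "1/p * kmean A (r^(k+1)) \<le> 1/p * (kmean A m + G1 * (r^(k+1) - m))"
      using p by (intro mult_left_mono) auto
    then show ?thesis by (simp add: algebra_simps)
  qed
  ultimately have "M_op p (r*p) n (\<lambda>t. -x + 1*t + 0*t^2) x \<le> 1/p * kmean A m - x"
    unfolding A_def by (intro M_op_quadratic_le) auto
  then show ?thesis unfolding A_def m_def by simp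
qed

lemma M_op_psi2_le:
  assumes "p \<le> 1"
  shows "M_op p (r*p) n (\<lambda>t. (t - x)^2) x \<le>
    (1/p)^2 * ((1 - r^(n+1)) * (1-r) / ((1 - r^(n+1) * r) * (1 - r^(n+1) * r^2)))
      * (nb_mean r n x * kmean (r^(n+1)) (nb_mean r n x))
    + (1/p * kmean (r^(n+1)) (nb_mean r n x) - x)^2
    + (1/p)^2 * ((1 - r^(n+1))^2 / ((1 - r^(n+1) * r)^2 * (1 - r^(n+1) * nb_mean r n x)^2))
      * (r^2 * (1-x) * (1 - r*x) / ((1 - r^(n+1) * x) * (1 - r^(n+1) * r * x)) - (nb_mean r n x)^2)"
proof -
  define A m c where "A = r^(n+1)" and "m = nb_mean r n x" and "c = 1/p"
  define S where "S = c * kmean A m - x"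
  define K where "K = (1-A)*(1-r)/((1-A*r)*(1-A*r^2))"
  define f1 where "f1 = (1 - 2*m + A*m^2)/(1-A*m)^2"
  define G1 where "G1 = -((1-A)/(1-A*m)^2)"
  define D where "D = (1-A)^2/((1-A*r)^2*(1-A*m)^2)"
  define E2 where "E2 = r^2 * (1-x) * (1 - r*x) / ((1 - A*x) * (1 - A*r*x))"
  have c: "1 \<le> c" using p assms by (simp add: c_def)
  have "0 \<le> kmean A m - x"
    using kmean_nb_mean_ge[OF r x] by (simp add: A_def m_def)
  moreover have "kmean A m - x \<le> S"
    using c kmean_range[OF power_Suc_bounds(1,2)[OF r], of m] nb_mean_bounds[OF r x] r
    unfolding S_def A_def m_def by (smt (verit) mult_le_cancel_right1)
  ultimately have S: "0 \<le> S" by linarith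
  have "(\<lambda>k. qnb_weight r n x k
        * ((c^2*K*(m * kmean A m) + S^2) + (c^2*K*f1 + 2*S*c*G1)*(r^(k+1) - m) + (c^2*D)*(r^(k+1) - m)^2))
      sums ((c^2*K*(m * kmean A m) + S^2) + (c^2*D)*(E2 - m^2))"
    unfolding A_def m_def E2_def
    by (rule sums_quadratic_centered[OF qnb_weight_sums_1[OF r x] qnb_weight_moment_1[OF r x]
        qnb_weight_moment_2[OF r x n]])
  moreover have "x^2 + (-2*x)/p * kmean A (r^(k+1)) + 1/p^2 * ksecond A r (r^(k+1))
      \<le> (c^2*K*(m * kmean A m) + S^2) + (c^2*K*f1 + 2*S*c*G1)*(r^(k+1) - m) + (c^2*D)*(r^(k+1) - m)^2" for k
  proof -
    have "c^2 * ksecond A r (r^(k+1)) - 2*x*c*kmean A (r^(k+1)) + x^2 \<le>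
        c^2*K*(m * kmean A m + f1*(r^(k+1)-m)) + S^2 + 2*S*c*G1*(r^(k+1)-m) + c^2*D*(r^(k+1)-m)^2"
      unfolding K_def f1_def S_def G1_def D_def A_def m_def
      using S c unfolding S_def A_def m_def
      by (intro psi2_term_le[OF power_Suc_bounds(1,2)[OF r] r node_bounds nb_mean_bounds[OF r x]]) auto
    moreover have "x^2 + (-2*x)/p * kmean A (r^(k+1)) + 1/p^2 * ksecond A r (r^(k+1))
        = c^2 * ksecond A r (r^(k+1)) - 2*x*c*kmean A (r^(k+1)) + x^2"
      unfolding c_def by (simp add: power_divide algebra_simps)
    ultimately show ?thesis by (simp add: algebra_simps)
  qed
  ultimately have "M_op p (r*p) n (\<lambda>t. x^2 + (-2*x)*t + 1*t^2) x
      \<le> (c^2*K*(m * kmean A m) + S^2) + (c^2*D)*(E2 - m^2)"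
    unfolding A_def by (intro M_op_quadratic_le) auto
  moreover have "(\<lambda>t::real. (t - x)^2) = (\<lambda>t. x^2 + (-2*x)*t + 1*t^2)"
    by (simp add: fun_eq_iff power2_eq_square algebra_simps)
  ultimately show ?thesis
    unfolding c_def K_def S_def D_def E2_def A_def m_def by (simp add: algebra_simps)
qed

end

section \<open>Comparison with the stated bounds\<close>

context
  fixes p r :: real and n :: nat
  assumes p: "0 < p" and r: "0 < r" "r < 1"
begin

lemma psi1_stated_bound_eq:
  assumes "n \<ge> 1"
  shows "(p^n - (r*p)^n * x) / ((r*p)^2 * pq_int p (r*p) n) + (1/(r*p) - 1) * x
    = (1/p) * (1 - r^n * x) / (r^2 * qint r n) + ((1/p)/r - 1) * x"
proof -
  obtain m where m: "n = m + 1" using assms by (metis add.commute le_Suc_ex)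
  have "qint r n \<noteq> 0" "p^m \<noteq> 0" using qint_ge_1[OF r assms] p by auto
  moreover have "pq_int p (r*p) n = p^m * qint r n" "p^n = p^m * p" "(r*p)^n = r^n * p^m * p"
    using pq_int_eq_qint[OF p r, of n] m by (simp_all add: power_mult_distrib mult_ac)
  ultimately show ?thesis using p r by (simp add: field_simps power2_eq_square)
qed

lemma psi2_stated_bound_eq:
  assumes "n \<ge> 2"
  shows "x^2 * (1 - 1/(r*p)^2 + 2*((r*p)+1) / ((r*p)^2 * pq_int p (r*p) n))
    + (p + r*p)^2 / (r*p)^5 * ((p^n - (r*p)^n * x) / pq_int p (r*p) n) * x
    + p * (p + r*p) / (r*p)^6 * ((p^n - (r*p)^n * x) * (p^(n-1) - (r*p)^(n-1) * x)
        / (pq_int p (r*p) n * pq_int p (r*p) (n-1)))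
   = x^2 * (1 - (1/p)^2/r^2 + 2*(r + 1/p) * (1/p)^n / (r^2 * qint r n))
     + (1/p)^2 * (1+r)^2 * x * (1 - r^n * x) / (r^5 * qint r n)
     + (1/p)^2 * (1+r) * (1 - r^n * x) * (1 - r^(n-1) * x) / (r^6 * qint r n * qint r (n-1))"
proof -
  obtain m where m: "n = m + 2" using assms by (metis add.commute le_Suc_ex)
  have "qint r n \<ge> 1" "qint r (n-1) \<ge> 1" by (rule qint_ge_1[OF r], use assms in simp)+
  then have nz: "qint r n \<noteq> 0" "qint r (n-1) \<noteq> 0" "p^m \<noteq> 0" using p by auto
  have pq: "pq_int p (r*p) n = p^m * p * qint r n" "pq_int p (r*p) (n-1) = p^m * qint r (n-1)"
    using pq_int_eq_qint[OF p r, of n] pq_int_eq_qint[OF p r, of "n-1"] m by (simp_all add: mult_ac)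
  have pow: "p^n = p^m * p^2" "(r*p)^n = r^n * p^m * p^2" "p^(n-1) = p^m * p" "(r*p)^(n-1) = r^(n-1) * p^m * p"
    "(1/p)^n = 1/(p^m * p^2)"
    using m by (simp_all add: power_add power_mult_distrib power_divide mult_ac power2_eq_square)
  have "1/(r*p)^2 = (1/p)^2/r^2" by (simp add: power_mult_distrib power_divide)
  moreover have "2*((r*p)+1) / ((r*p)^2 * (P*p*N)) = 2*(r + 1/p) * (1/(P*p^2)) / (r^2*N)"
    if "P \<noteq> 0" "N \<noteq> 0" for P N :: real
    using that p r by (simp add: field_simps power2_eq_square)
  moreover have "(p + r*p)^2 / (r*p)^5 * ((P*p^2 - s*P*p^2*x) / (P*p*N)) * x
      = (1/p)^2 * (1+r)^2 * x * (1 - s*x) / (r^5*N)"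
    if "P \<noteq> 0" "N \<noteq> 0" for P N s :: real
    using that p r by (simp add: field_simps eval_nat_numeral)
  moreover have "p * (p + r*p) / (r*p)^6 * ((P*p^2 - s*P*p^2*x) * (P*p - t*P*p*x) / ((P*p*N) * (P*M)))
      = (1/p)^2 * (1+r) * (1 - s*x) * (1 - t*x) / (r^6*N*M)"
    if "P \<noteq> 0" "N \<noteq> 0" "M \<noteq> 0" for P N M s t :: real
    using that p r by (simp add: field_simps eval_nat_numeral)
  ultimately show ?thesis unfolding pq pow using nz by simp
qed

end

context
  fixes r :: real
  assumes r: "0 < r" "r < 1"
begin

lemma psi1_qint_bound_le:
  assumes "n \<ge> 1" "1 \<le> c" "0 \<le> x" "x \<le> 1"
  shows "c * (1-x) / qint r (n+2) + (c-1) * x \<le> c * (1 - r^n * x) / (r^2 * qint r n) + (c/r - 1) * x"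
proof -
  have N: "qint r n \<ge> 1" "r^2 * qint r n \<le> qint r (n+2)"
  proof -
    show "qint r n \<ge> 1" using qint_ge_1[OF r assms(1)] .
    have "r^2 \<le> 1" using r by (simp add: power_le_one)
    then have "r^2 * qint r n \<le> qint r n" using \<open>qint r n \<ge> 1\<close>
        by (intro mult_left_le_one_le) auto
    then show "r^2 * qint r n \<le> qint r (n+2)" using qint_mono[OF r, of n "n+2"] by linarith
  qed
  have "0 < r^2 * qint r n" using N r by simp
  then have "(1-x) / qint r (n+2) \<le> (1-x) / (r^2 * qint r n)"
    using assms N by (intro divide_left_mono) auto
  also have "\<dots> \<le> (1 - r^n * x) / (r^2 * qint r n)"
    using assms r N by (intro divide_right_mono) (auto simp: power_le_one mult_left_le_one_le)
  finally have "c * ((1-x) / qint r (n+2)) \<le> c * ((1 - r^n * x) / (r^2 * qint r n))"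
    using assms by (intro mult_left_mono) auto
  moreover have "(c-1) * x \<le> (c/r - 1) * x"
    using assms r by (intro mult_right_mono) (auto simp: le_divide_eq mult_left_le_one_le)
  ultimately show ?thesis by simp
qed

text \<open>The second moment bound is compared coefficientwise in the basis $(1-x)^2$, $x(1-x)$, $x^2$.\<close>

lemma psi2_bound_basis_decomp:
  fixes c x N1 N2 N3 :: real
  assumes "N2 \<noteq> 0" "N3 \<noteq> 0"
  shows "c^2 * (r * (1 - x + x*N1) / (N2*N3)) + (c * (1-x) / N2 + (c-1) * x)^2 + c^2 * (r^2 * N1 * x / N2^2)
    = c^2 * (1-x)^2 * (r/(N2*N3) + 1/N2^2)
      + x * (1-x) * (c^2 * (r/(N2*N3) + r*N1/(N2*N3) + r^2*N1/N2^2) + 2*c*(c-1)/N2)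
      + x^2 * (c^2 * (r*N1/(N2*N3) + r^2*N1/N2^2) + (c-1)^2)"
  using assms by (simp add: field_simps power2_eq_square)

lemma psi2_coeff_0_le:
  assumes "n \<ge> 2"
  shows "r/(qint r (n+2) * qint r (n+3)) + 1/(qint r (n+2))^2 \<le> (1+r)/(r^6 * qint r n * qint r (n-1))"
proof -
  define N0 Nm N2 N3 where "N0 = qint r n" and "Nm = qint r (n-1)" and "N2 = qint r (n+2)" and "N3
      = qint r (n+3)"
  have pos: "N0 \<ge> 1" "Nm \<ge> 1" using qint_ge_1[OF r] assms by (auto simp: N0_def Nm_def)
  have le: "N0 \<le> N2" "Nm \<le> N2" "Nm \<le> N3"
      using qint_mono[OF r] by (auto simp: N0_def Nm_def N2_def N3_def)
  have "r/(N2*N3) \<le> r/(N0*Nm)"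
    using r pos le by (intro divide_left_mono mult_mono) auto
  moreover have "1/N2^2 \<le> 1/(N0*Nm)"
    using pos le by (auto simp: power2_eq_square intro!: divide_left_mono mult_mono)
  ultimately have "r/(N2*N3) + 1/N2^2 \<le> (1+r)/(N0*Nm)" by (simp add: add_divide_distrib)
  also have "\<dots> \<le> (1+r)/(r^6*(N0*Nm))"
  proof (rule divide_left_mono)
    have "r^6 \<le> 1" using r by (simp add: power_le_one)
    then show "r^6*(N0*Nm) \<le> N0*Nm" using pos r by (intro mult_left_le_one_le) auto
  qed (use r pos in auto)
  finally show ?thesis unfolding N0_def Nm_def N2_def N3_def by (simp add: mult.assoc)
qed

lemma qint_Suc3_ge: "r * (1 + qint r (n+1)) \<le> qint r (n+3)"
proof -
  have "n+3 = Suc (Suc (n+1))" by simp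
  then have "qint r (n+3) = 1 + r * (1 + r * qint r (n+1))"
    by (simp only: qint_Suc[OF r])
  moreover have "r * ((1-r) * qint r (n+1)) \<le> 1"
  proof (rule mult_le_one)
    have "(1-r) * qint r (n+1) = 1 - r^(n+1)"
      using one_minus_power_eq[of r "n+1"] r by simp
    then show "(1-r) * qint r (n+1) \<le> 1" "0 \<le> (1-r) * qint r (n+1)"
      using r qint_nonneg[OF r, of "n+1"] power_le_one[of r "n+1"] by auto
  qed (use r in auto)
  ultimately show ?thesis by (simp add: algebra_simps power2_eq_square)
qed

lemma psi2_coeff_1_le:
  assumes "n \<ge> 1" "c \<ge> 0"
  shows "c^2 * (r/(qint r (n+2) * qint r (n+3)) + r * qint r (n+1)/(qint r (n+2) * qint r (n+3))
      + r^2 * qint r (n+1)/(qint r (n+2))^2) + 2*c*(c-1)/qint r (n+2)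
    \<le> c^2 * (1+r)^2/(r^5 * qint r n)"
proof -
  define N0 N1 N2 N3 where "N0 = qint r n" and "N1 = qint r (n+1)" and "N2 = qint r (n+2)" and "N3
      = qint r (n+3)"
  have pos: "N0 \<ge> 1" "N1 \<ge> 1" "N2 \<ge> 1" "N3 \<ge> 1"
    using qint_ge_1[OF r] assms by (auto simp: N0_def N1_def N2_def N3_def)
  have le: "N0 \<le> N2" "N1 \<le> N2" using qint_mono[OF r] by (auto simp: N0_def N1_def N2_def)
  have "r*(1+N1)/(N2*N3) \<le> N3/(N2*N3)"
    using qint_Suc3_ge[of n] pos by (intro divide_right_mono) (auto simp: N1_def N3_def)
  then have a: "r/(N2*N3) + r*N1/(N2*N3) \<le> 1/N2"
    using pos by (simp add: add_divide_distrib algebra_simps)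
  have "r^2*N1/N2^2 = (r^2/N2)*(N1/N2)" by (simp add: power2_eq_square)
  also have "\<dots> \<le> r^2/N2" using pos le by (intro mult_left_le) auto
  finally have b: "r^2*N1/N2^2 \<le> r^2/N2" .
  have "2*c*(c-1)/N2 \<le> 2*c^2/N2"
    using assms pos by (intro divide_right_mono) (auto simp: power2_eq_square algebra_simps)
  then have "c^2*(r/(N2*N3) + r*N1/(N2*N3) + r^2*N1/N2^2) + 2*c*(c-1)/N2 \<le> c^2*(1/N2 + r^2/N2) + 2*c^2/N2"
    using a b by (intro add_mono mult_left_mono) auto
  also have "\<dots> = c^2*(3 + r^2)/N2" using pos by (simp add: field_simps)
  also have "\<dots> \<le> c^2*(3 + r^2)/N0" using pos le by (intro divide_left_mono) auto
  also have "\<dots> \<le> c^2*(1+r)^2/(r^5*N0)"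
  proof -
    have "r^5 \<le> r" "r^5 \<le> 1" "r^7 \<le> r^2"
      using power_decreasing[of 1 5 r] power_decreasing[of 2 7 r] power_le_one[of r 5] r by auto
    moreover have "r^5*(3 + r^2) = 3*r^5 + r^7" by (simp add: algebra_simps flip: power_add)
    ultimately have "r^5*(3 + r^2) \<le> (1+r)^2" by (simp add: power2_eq_square algebra_simps)
    then have "3 + r^2 \<le> (1+r)^2/r^5" using r by (simp add: pos_le_divide_eq mult.commute)
    then have "c^2*(3 + r^2)/N0 \<le> c^2*((1+r)^2/r^5)/N0" using pos
        by (intro divide_right_mono mult_left_mono) auto
    then show ?thesis by simp
  qed
  finally show ?thesis unfolding N0_def N1_def N2_def N3_def .
qed

lemma inv_square_minus_one_le: "c^2/r^2 - c^2 \<le> c^2 * (1+r)^2 * (1-r)/r^5"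
proof -
  have "r^3 \<le> 1" using r by (simp add: power_le_one)
  then have "(1+r)*(1-r)*r^3 \<le> (1+r)*(1-r)*(1+r)" using r by (intro mult_left_mono) auto
  then have "(1 - r^2)*r^3/r^5 \<le> (1+r)^2*(1-r)/r^5"
    using r by (intro divide_right_mono) (auto simp: power2_eq_square algebra_simps)
  moreover have "(1 - r^2)*r^3/r^5 = (1 - r^2)/r^2"
  proof -
    have "r^5 = r^2*r^3" by (simp flip: power_add)
    then show ?thesis using r by (simp only:) (intro nonzero_mult_divide_mult_cancel_right, simp)
  qed
  ultimately have "c^2*((1 - r^2)/r^2) \<le> c^2*((1+r)^2*(1-r)/r^5)" by (intro mult_left_mono) auto
  moreover have "c^2/r^2 - c^2 = c^2*((1 - r^2)/r^2)" using r by (simp add: field_simps)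
  ultimately show ?thesis by simp
qed

text \<open>Bernoulli's inequality absorbs the growth of $[n]_r \le n$ into $c^n$.\<close>

lemma excess_times_qint_le_power:
  assumes "c \<ge> 1"
  shows "(c-1) * r^2 * qint r n \<le> c^n"
proof -
  have "r^2 \<le> 1" using r by (simp add: power_le_one)
  then have "((c-1) * qint r n) * r^2 \<le> (c-1) * qint r n"
    using assms qint_nonneg[OF r, of n] by (intro mult_right_le_one_le) auto
  also have "\<dots> \<le> (c-1) * real n" using assms qint_le_of_nat[OF r, of n] by (intro mult_left_mono) auto
  also have "\<dots> \<le> (1 + (c-1))^n" using assms Bernoulli_inequality[of "c-1" n]
      by (simp add: mult.commute)
  finally show ?thesis by (simp add: mult_ac)
qed

lemma psi2_coeff_2_le:
  assumes n: "n \<ge> 2" and c: "c \<ge> 1"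
  shows "c^2 * (r * qint r (n+1)/(qint r (n+2) * qint r (n+3)) + r^2 * qint r (n+1)/(qint r (n+2))^2) + (c-1)^2
    \<le> 1 - c^2/r^2 + 2*(r+c)*c^n/(r^2 * qint r n) + c^2 * (1+r)^2 * (1-r)/r^5"
proof -
  define N0 N1 N2 N3 where "N0 = qint r n" and "N1 = qint r (n+1)" and "N2 = qint r (n+2)" and "N3
      = qint r (n+3)"
  have pos: "N0 \<ge> 1" "N1 \<ge> 1" "N2 \<ge> 1" "N3 \<ge> 1"
    using qint_ge_1[OF r] n by (auto simp: N0_def N1_def N2_def N3_def)
  have le: "N0 \<le> N2" "N1 \<le> N2" "N0 \<le> N3"
      using qint_mono[OF r] by (auto simp: N0_def N1_def N2_def N3_def)
  have "r*N1/(N2*N3) = (r/N3)*(N1/N2)" by simp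
  also have "\<dots> \<le> r/N3" using pos le r by (intro mult_left_le) auto
  also have "\<dots> \<le> r/N0" using pos le r by (simp add: divide_left_mono)
  finally have a1: "r*N1/(N2*N3) \<le> r/N0" .
  have "r^2*N1/N2^2 = (r^2/N2)*(N1/N2)" by (simp add: power2_eq_square)
  also have "\<dots> \<le> r^2/N2" using pos le by (intro mult_left_le) auto
  also have "\<dots> \<le> r^2/N0" using pos le by (simp add: divide_left_mono)
  finally have "r*N1/(N2*N3) + r^2*N1/N2^2 \<le> (r + r^2)/N0" using a1 by (simp add: add_divide_distrib)
  then have "c^2*(r*N1/(N2*N3) + r^2*N1/N2^2) \<le> c^2*((r + r^2)/N0)" by (rule mult_left_mono) simp
  moreover have "c^2*((r + r^2)/N0) + 2*c*(c-1) \<le> 2*(r+c)*c^n/(r^2*N0)"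
  proof -
    have "c^2 \<le> c^n" using c n by (intro power_increasing) auto
    moreover have "r^3*(1+r) \<le> 2*r"
    proof -
      have "r^3 \<le> r" "r^4 \<le> r" using power_decreasing[of 1 3 r] power_decreasing[of 1 4 r] r by auto
      moreover have "r^3*(1+r) = r^3 + r^4" by (simp add: algebra_simps eval_nat_numeral)
      ultimately show ?thesis by simp
    qed
    moreover have "0 \<le> c^n" "0 \<le> r^3*(1+r)" using r c by auto
    ultimately have "c^2*(r^3*(1+r)) \<le> c^n*(2*r)" by (rule mult_mono)
    moreover have "2*c*((c-1)*r^2*N0) \<le> 2*c*c^n"
      using excess_times_qint_le_power[OF c, of n] c unfolding N0_def by (intro mult_left_mono) auto
    ultimately have "c^2*r^3*(1+r) + 2*c*(c-1)*r^2*N0 \<le> 2*(r+c)*c^n"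
      by (simp add: algebra_simps)
    then have "(c^2*r^3*(1+r) + 2*c*(c-1)*r^2*N0)/(r^2*N0) \<le> 2*(r+c)*c^n/(r^2*N0)"
      using r pos by (intro divide_right_mono) auto
    moreover have "c^2*((r + r^2)/N0) + 2*c*(c-1) = (c^2*r^3*(1+r) + 2*c*(c-1)*r^2*N0)/(r^2*N0)"
      using r pos by (simp add: field_simps power2_eq_square power3_eq_cube)
    ultimately show ?thesis by simp
  qed
  moreover have "(c-1)^2 = 2*c*(c-1) + 1 - c^2" by (simp add: power2_eq_square algebra_simps)
  ultimately show ?thesis
    using inv_square_minus_one_le[of c] unfolding N0_def N1_def N2_def N3_def by linarith
qed

lemma psi2_qint_bound_le:
  assumes n: "n \<ge> 2" and c: "1 \<le> c" and x: "0 \<le> x" "x \<le> 1"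
  shows "c^2 * (r * (1 - x + x * qint r (n+1)) / (qint r (n+2) * qint r (n+3)))
      + (c * (1-x) / qint r (n+2) + (c-1) * x)^2 + c^2 * (r^2 * qint r (n+1) * x / (qint r (n+2))^2)
    \<le> x^2 * (1 - c^2/r^2 + 2*(r+c) * c^n / (r^2 * qint r n))
      + c^2 * (1+r)^2 * x * (1 - r^n * x) / (r^5 * qint r n)
      + c^2 * (1+r) * (1 - r^n * x) * (1 - r^(n-1) * x) / (r^6 * qint r n * qint r (n-1))"
proof -
  define N0 Nm N1 N2 N3 where "N0 = qint r n" and "Nm = qint r (n-1)" and "N1 = qint r (n+1)"
    and "N2 = qint r (n+2)" and "N3 = qint r (n+3)"
  have pos: "N0 \<ge> 1" "Nm \<ge> 1" "N2 \<ge> 1" "N3 \<ge> 1"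
    using qint_ge_1[OF r] n by (auto simp: N0_def Nm_def N2_def N3_def)
  have nz: "N2 \<noteq> 0" "N3 \<noteq> 0" using pos by auto
  define C0 C1 C2 where "C0 = (1+r)/(r^6*N0*Nm)" and "C1 = c^2*(1+r)^2/(r^5*N0)"
    and "C2 = 1 - c^2/r^2 + 2*(r+c)*c^n/(r^2*N0) + c^2*(1+r)^2*(1-r)/r^5"
  have "c^2*(1-x)^2*(r/(N2*N3) + 1/N2^2) \<le> c^2*(1-x)^2*C0"
    using psi2_coeff_0_le[OF n] unfolding C0_def N0_def Nm_def N2_def N3_def
        by (intro mult_left_mono) (auto simp: mult.assoc)
  moreover have "x*(1-x)*(c^2*(r/(N2*N3) + r*N1/(N2*N3) + r^2*N1/N2^2) + 2*c*(c-1)/N2) \<le> x*(1-x)*C1"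
    using psi2_coeff_1_le[of n c] n c x unfolding C1_def N0_def N1_def N2_def N3_def
        by (intro mult_left_mono) auto
  moreover have "x^2*(c^2*(r*N1/(N2*N3) + r^2*N1/N2^2) + (c-1)^2) \<le> x^2*C2"
    using psi2_coeff_2_le[OF n c] unfolding C2_def N0_def N1_def N2_def N3_def by (intro mult_left_mono) auto
  moreover have "c^2*(1-x)^2*C0 \<le> c^2*(1+r)*(1 - r^n*x)*(1 - r^(n-1)*x)/(r^6*N0*Nm)"
  proof -
    have "1 - x \<le> 1 - r^n*x" "1 - x \<le> 1 - r^(n-1)*x"
      using x r by (auto simp: power_le_one mult_left_le_one_le)
    then have "(1-x)^2 \<le> (1 - r^n*x)*(1 - r^(n-1)*x)"
      unfolding power2_eq_square using x by (intro mult_mono) auto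
    then have "c^2*(1+r)/(r^6*N0*Nm)*(1-x)^2 \<le> c^2*(1+r)/(r^6*N0*Nm)*((1 - r^n*x)*(1 - r^(n-1)*x))"
      using r pos by (intro mult_left_mono) auto
    then show ?thesis unfolding C0_def by (simp add: mult_ac)
  qed
  moreover have "c^2*(1+r)^2*x*(1 - r^n*x)/(r^5*N0) = x*(1-x)*C1 + x^2*(c^2*(1+r)^2*(1-r)/r^5)"
  proof -
    have N0_eq: "(1-r)*N0 = 1 - r^n" using one_minus_power_eq[of r n] r unfolding N0_def by simp
    have expand: "1 - r^n*x = (1-x) + x*((1-r)*N0)" unfolding N0_eq by (simp add: algebra_simps)
    show ?thesis unfolding C1_def expand using pos r by (simp add: field_simps power2_eq_square)
  qed
  ultimately show ?thesis
    unfolding N0_def[symmetric] Nm_def[symmetric] N1_def[symmetric] N2_def[symmetric] N3_def[symmetric]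
      psi2_bound_basis_decomp[OF nz] C2_def
    by (simp add: algebra_simps)
qed

end

context
  fixes p r :: real and n :: nat and x :: real
  assumes p: "0 < p" "p \<le> 1" and r: "0 < r" "r < 1" and n: "n \<ge> 1" and x: "0 \<le> x" "x \<le> 1"
begin

lemma scaled_kmean_nb_mean_bounds:
  assumes "x < 1"
  shows "0 \<le> 1/p * kmean (r^(n+1)) (nb_mean r n x) - x"
    "1/p * kmean (r^(n+1)) (nb_mean r n x) - x \<le> 1/p * (1-x) / qint r (n+2) + (1/p - 1) * x"
proof -
  have x': "0 \<le> x" "x < 1" using x assms by auto
  define G where "G = kmean (r^(n+1)) (nb_mean r n x)"
  have G: "0 \<le> G - x" "G - x \<le> (1-x) / qint r (n+2)"
    using kmean_nb_mean_ge[OF r x'] kmean_nb_mean_minus_x_le[OF r x'] by (auto simp: G_def)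
  have "1/p * (G - x) \<le> 1/p * ((1-x) / qint r (n+2))" by (rule mult_left_mono) (use G p in auto)
  moreover have "0 \<le> 1/p * (G - x)" "0 \<le> (1/p - 1) * x" using G p x by auto
  moreover have "1/p * G - x = 1/p * (G - x) + (1/p - 1) * x" by (simp add: diff_divide_distrib algebra_simps)
  moreover have "1/p * ((1-x) / qint r (n+2)) = 1/p * (1-x) / qint r (n+2)" by simp
  ultimately show "0 \<le> 1/p * G - x" "1/p * G - x \<le> 1/p * (1-x) / qint r (n+2) + (1/p - 1) * x"
    by linarith+
qed

lemma M_op_psi1_le_qint: "M_op p (r*p) n (\<lambda>t. t - x) x \<le> 1/p * (1-x) / qint r (n+2) + (1/p - 1) * x"
proof (cases "x = 1")
  case True
  then show ?thesis using p by (simp add: M_op_def)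
next
  case False
  then have x': "0 \<le> x" "x < 1" using x by auto
  then show ?thesis
    using M_op_psi1_le[OF p(1) r n x'] scaled_kmean_nb_mean_bounds(2) by fastforce
qed

lemma M_op_psi2_le_qint:
  "M_op p (r*p) n (\<lambda>t. (t - x)^2) x
    \<le> (1/p)^2 * (r * (1 - x + x * qint r (n+1)) / (qint r (n+2) * qint r (n+3)))
      + (1/p * (1-x) / qint r (n+2) + (1/p - 1) * x)^2
      + (1/p)^2 * (r^2 * qint r (n+1) * x / (qint r (n+2))^2)"
proof (cases "x = 1")
  case True
  have "qint r (n+2) > 0" "qint r (n+3) > 0" "qint r (n+1) > 0" using qint_pos[OF r] by auto
  then show ?thesis using True p r by (simp add: M_op_def)
next
  case False
  then have x': "0 \<le> x" "x < 1" using x by auto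
  show ?thesis
    using M_op_psi2_le[OF p(1) r n x' p(2)]
      power_mono[OF scaled_kmean_nb_mean_bounds(2)[OF x'(2)] scaled_kmean_nb_mean_bounds(1)[OF x'(2)], of 2]
      mult_left_mono[OF variance_term_1_le[OF r x', of n], of "(1/p)^2"]
      mult_left_mono[OF variance_term_2_le[OF r x', of n], of "(1/p)^2"]
    by (simp add: mult.assoc)
qed

end

theorem corollary1:
  fixes p q :: real and n :: nat
  assumes "0 < q" "q < p" "p \<le> 1" "n \<ge> 2"
  shows "\<forall>x\<in>{0..1}.
     M_op p q n (\<lambda>t. t - x) x
       \<le> (p ^ n - q ^ n * x) / (q ^ 2 * pq_int p q n) + (1 / q - 1) * x
   \<and> M_op p q n (\<lambda>t. (t - x) ^ 2) x
       \<le> x ^ 2 * (1 - 1 / q ^ 2 + 2 * (q + 1) / (q ^ 2 * pq_int p q n))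
         + (p + q) ^ 2 / q ^ 5 * ((p ^ n - q ^ n * x) / pq_int p q n) * x
         + p * (p + q) / q ^ 6 * ((p ^ n - q ^ n * x) * (p ^ (n - 1) - q ^ (n - 1) * x)
             / (pq_int p q n * pq_int p q (n - 1)))"
proof -
  define r where "r = q / p"
  have p: "0 < p" "p \<le> 1" and r: "0 < r" "r < 1" and c: "1 \<le> 1/p" and n: "n \<ge> 1" "n \<ge> 2"
    using assms by (auto simp: r_def field_simps)
  have q: "q = r * p" using assms by (simp add: r_def)
  show ?thesis
    unfolding q psi1_stated_bound_eq[OF p(1) r n(1)] psi2_stated_bound_eq[OF p(1) r n(2)]
    using order.trans[OF M_op_psi1_le_qint[OF p r n(1)] psi1_qint_bound_le[OF r n(1) c]]
      order.trans[OF M_op_psi2_le_qint[OF p r n(1)] psi2_qint_bound_le[OF r n(2) c]]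
    by simp
qed

end
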